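(* Let $f$ and $g$ be probability densities on a subset $X\subseteq\mathbb{R}^n$. Assume $f$ is measurable and differentiable, vanishes and is differentiable on the boundary $\partial X$, that $\nabla_x f$ is absolutely continuous with respect to $g$, and that the integrals below exist and are finite. Let $\|\cdot\|$ be a norm on $\mathbb{R}^n$ with dual norm $\|\cdot\|_*$, $\alpha\ge1$ and $\alpha^{-1}+\beta^{-1}=1$. Then $$\Big(\int_X\|x\|^{\alpha}g(x)\,\mathrm{d}x\Big)^{1/\alpha}\Big(\int_X\Big\|\frac{\nabla_x f(x)}{g(x)}\Big\|_*^{\beta}g(x)\,\mathrm{d}x\Big)^{1/\beta}\ \ge\ n,$$ with equality if $\nabla_x f(x)=-K\,g(x)\|x\|^{\alpha-1}\nabla_x\|x\|$ for some $K>0$; when the dual norm is strictly convex, equality holds only in this case.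
   Context: The dual norm is $\|Y\|_*=\sup_{\|X\|\le1}X\cdot Y$. $\nabla_x\|x\|$ denotes the gradient of the norm at $x$. A norm is strictly convex if its unit ball is strictly convex. *)

theory Defs
  imports "HOL-Analysis.Analysis"
begin

definition is_norm :: "(real^'n \<Rightarrow> real) \<Rightarrow> bool" where
  "is_norm N \<longleftrightarrow> (\<forall>x. 0 \<le> N x) \<and> (\<forall>x. N x = 0 \<longleftrightarrow> x = 0)
     \<and> (\<forall>c x. N (c *\<^sub>R x) = \<bar>c\<bar> * N x) \<and> (\<forall>x y. N (x + y) \<le> N x + N y)"

definition dual_norm :: "(real^'n \<Rightarrow> real) \<Rightarrow> real^'n \<Rightarrow> real" where
  "dual_norm N y = (SUP x\<in>{x. N x \<le> 1}. x \<bullet> y)"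

definition strictly_convex_set :: "'a::real_normed_vector set \<Rightarrow> bool" where
  "strictly_convex_set S \<longleftrightarrow> (\<forall>x\<in>S. \<forall>y\<in>S. x \<noteq> y \<longrightarrow>
      (\<forall>t. 0 < t \<and> t < 1 \<longrightarrow> (1 - t) *\<^sub>R x + t *\<^sub>R y \<in> interior S))"

definition strictly_convex_norm :: "(real^'n \<Rightarrow> real) \<Rightarrow> bool" where
  "strictly_convex_norm N \<longleftrightarrow> strictly_convex_set {x. N x \<le> 1}"

definition has_grad :: "(real^'n \<Rightarrow> real) \<Rightarrow> real^'n \<Rightarrow> real^'n \<Rightarrow> bool" where
  "has_grad h v x \<longleftrightarrow> (h has_derivative (\<lambda>u. v \<bullet> u)) (at x)"

text \<open>Essential supremum of D on X w.r.t. the measure g(x) dx.\<close>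
definition ess_sup_wrt :: "(real^'n) set \<Rightarrow> (real^'n \<Rightarrow> real) \<Rightarrow> (real^'n \<Rightarrow> real) \<Rightarrow> real" where
  "ess_sup_wrt X g D = Inf {c. AE x in lebesgue. x \<in> X \<and> 0 < g x \<longrightarrow> D x \<le> c}"

text \<open>The weighted L^beta quantity with beta the Hoelder conjugate of alpha
  (beta = infinity, i.e. essential supremum, when alpha = 1).\<close>
definition conj_moment :: "real \<Rightarrow> (real^'n) set \<Rightarrow> (real^'n \<Rightarrow> real) \<Rightarrow> (real^'n \<Rightarrow> real) \<Rightarrow> real" where
  "conj_moment \<alpha> X g D =
     (if \<alpha> = 1 then ess_sup_wrt X g D
      else (\<integral>x\<in>X. D x powr (\<alpha> / (\<alpha> - 1)) * g x \<partial>lebesgue) powr ((\<alpha> - 1) / \<alpha>))"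

end

theory Submission
  imports Defs
begin

text \<open>
  For \<open>x \<in> X\<close> the pairing of \<open>N\<close> with its dual norm gives
  \<open>\<bar>x \<bullet> \<nabla>f x\<bar> \<le> N x * dual_norm N (\<nabla>f x / g x) * g x\<close>, and integration by parts gives
  \<open>\<integral>\<^sub>X x \<bullet> \<nabla>f x dx = - n \<integral> f = - n\<close>; Hoelder's inequality bounds the integral of the
  right-hand side by the product of the two moments. The integration by parts needs no regularity
  of the boundary of \<open>X\<close>: integrate \<open>d/ds f (s x)\<close> over \<open>s \<in> [1, 2]\<close> and over \<open>x\<close> and exchange
  the integrals.

  Equality forces equality almost everywhere in both steps. Equality in Young's inequality makes
  \<open>dual_norm N (\<nabla>f / g)\<close> proportional to \<open>N x powr (\<alpha> - 1)\<close>, and equality in the pairing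
  makes \<open>- \<nabla>f x\<close>, rescaled to dual norm \<open>1\<close>, a norming functional of \<open>x\<close>. If the dual norm is
  strictly convex this functional is unique, so \<open>N\<close> is differentiable at \<open>x\<close> with the functional
  as its gradient.
\<close>

section \<open>Norms on \<open>\<real>\<^sup>n\<close> given as functions\<close>

context
  fixes N :: "real^'n \<Rightarrow> real"
  assumes N: "is_norm N"
begin

lemma is_norm_nonneg: "0 \<le> N x"
  and is_norm_eq_0_iff: "N x = 0 \<longleftrightarrow> x = 0"
  and is_norm_scaleR: "N (c *\<^sub>R x) = \<bar>c\<bar> * N x"
  and is_norm_triangle: "N (x + y) \<le> N x + N y"
  using N unfolding is_norm_def by auto

lemma is_norm_pos: "x \<noteq> 0 \<Longrightarrow> 0 < N x"
  using is_norm_nonneg is_norm_eq_0_iff by (simp add: order_less_le)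

lemma is_norm_zero [simp]: "N 0 = 0"
  by (simp add: is_norm_eq_0_iff)

lemma is_norm_minus [simp]: "N (- x) = N x"
  using is_norm_scaleR[of "-1" x] by simp

lemma is_norm_diff_le: "\<bar>N x - N y\<bar> \<le> N (x - y)"
  using is_norm_triangle[of "x - y" y] is_norm_triangle[of "y - x" x] is_norm_minus[of "x - y"]
  by (simp add: abs_le_iff)

lemma is_norm_sum_le: "N (sum f S) \<le> (\<Sum>i\<in>S. N (f i))"
proof (cases "finite S")
  case True then show ?thesis
    by (induction S rule: finite_induct) (auto intro: order_trans[OF is_norm_triangle])
qed simp

lemma is_norm_le_norm: "\<exists>C>0. \<forall>x. N x \<le> C * norm x"
proof (intro exI conjI allI)
  let ?C = "1 + (\<Sum>b\<in>Basis. N (b::real^'n))"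
  show "?C > 0" using sum_nonneg[of Basis N] is_norm_nonneg by (simp add: add_pos_nonneg)
  fix x :: "real^'n"
  have "N x = N (\<Sum>b\<in>Basis. (x \<bullet> b) *\<^sub>R b)" by (simp add: euclidean_representation)
  also have "\<dots> \<le> (\<Sum>b\<in>Basis. \<bar>x \<bullet> b\<bar> * N b)"
    using is_norm_sum_le[of "\<lambda>b. (x \<bullet> b) *\<^sub>R b" Basis] by (simp add: is_norm_scaleR)
  also have "\<dots> \<le> (\<Sum>b\<in>Basis. norm x * N b)"
    by (intro sum_mono mult_right_mono) (auto simp: Basis_le_norm is_norm_nonneg)
  also have "\<dots> = norm x * (\<Sum>b\<in>Basis. N b)" by (simp add: sum_distrib_left)
  also have "\<dots> \<le> ?C * norm x" by (simp add: algebra_simps)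
  finally show "N x \<le> ?C * norm x" .
qed

lemma continuous_on_is_norm: "continuous_on S N"
proof -
  obtain C where C: "C > 0" "\<And>x. N x \<le> C * norm x" using is_norm_le_norm by blast
  have "C-lipschitz_on S N"
    using C order_trans[OF is_norm_diff_le C(2)] by (intro lipschitz_onI) (auto simp: dist_real_def dist_norm)
  then show ?thesis by (rule lipschitz_on_continuous_on)
qed

lemma is_norm_ge_norm: "\<exists>c>0. \<forall>x. c * norm x \<le> N x"
proof -
  have "sphere (0::real^'n) 1 \<noteq> {}" by simp
  then obtain z where z: "z \<in> sphere 0 1" "\<And>y. y \<in> sphere 0 1 \<Longrightarrow> N z \<le> N y"
    using continuous_attains_inf[OF compact_sphere _ continuous_on_is_norm] by blast
  have "N z * norm x \<le> N x" for x
  proof (cases "x = 0")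
    case False
    then have "N z \<le> N ((1 / norm x) *\<^sub>R x)" by (intro z(2)) auto
    then show ?thesis using False by (simp add: is_norm_scaleR field_simps)
  qed simp
  moreover have "N z > 0" using z(1) by (intro is_norm_pos) auto
  ultimately show ?thesis by (metis mult.commute)
qed

lemma convex_on_is_norm: "convex_on UNIV N"
proof (rule convex_onI)
  fix x y :: "real^'n" and t :: real assume "0 < t" "t < 1"
  then show "N ((1 - t) *\<^sub>R x + t *\<^sub>R y) \<le> (1 - t) * N x + t * N y"
    using is_norm_triangle[of "(1 - t) *\<^sub>R x" "t *\<^sub>R y"] by (simp add: is_norm_scaleR)
qed simp

lemma bdd_above_dual_norm: "bdd_above ((\<lambda>x. x \<bullet> y) ` {x. N x \<le> 1})"
proof -
  obtain c where c: "c > 0" "\<And>x. c * norm x \<le> N x" using is_norm_ge_norm by blast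
  have "x \<bullet> y \<le> norm y / c" if "N x \<le> 1" for x
  proof -
    have "norm x \<le> 1 / c" using c(2)[of x] that c(1) by (simp add: field_simps)
    have "x \<bullet> y \<le> norm x * norm y" by (rule norm_cauchy_schwarz)
    also have "\<dots> \<le> (1 / c) * norm y" using \<open>norm x \<le> 1 / c\<close> by (rule mult_right_mono) simp
    finally show ?thesis by simp
  qed
  then show ?thesis by (auto simp: bdd_above_def)
qed

lemma dual_norm_ge: "N x \<le> 1 \<Longrightarrow> x \<bullet> y \<le> dual_norm N y"
  unfolding dual_norm_def by (rule cSUP_upper[OF _ bdd_above_dual_norm]) auto

lemma dual_norm_le: "(\<And>x. N x \<le> 1 \<Longrightarrow> x \<bullet> y \<le> M) \<Longrightarrow> dual_norm N y \<le> M"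
  unfolding dual_norm_def by (rule cSUP_least) (auto intro!: exI[of _ 0])

lemma inner_le_is_norm_dual_norm: "x \<bullet> y \<le> N x * dual_norm N y"
proof (cases "x = 0")
  case True then show ?thesis using dual_norm_ge[of 0 y] by simp
next
  case False
  then have pos: "N x > 0" by (rule is_norm_pos)
  have "((1 / N x) *\<^sub>R x) \<bullet> y \<le> dual_norm N y"
    by (rule dual_norm_ge) (use pos in \<open>simp add: is_norm_scaleR\<close>)
  then show ?thesis using pos by (simp add: field_simps)
qed

lemma abs_inner_le_is_norm_dual_norm: "\<bar>x \<bullet> y\<bar> \<le> N x * dual_norm N y"
  using inner_le_is_norm_dual_norm[of x y] inner_le_is_norm_dual_norm[of "-x" y] by simp

lemma dual_norm_le_1_iff: "dual_norm N z \<le> 1 \<longleftrightarrow> (\<forall>u. z \<bullet> u \<le> N u)"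
proof
  assume "dual_norm N z \<le> 1"
  then show "\<forall>u. z \<bullet> u \<le> N u"
    using inner_le_is_norm_dual_norm is_norm_nonneg
    by (metis inner_commute mult_left_le order_trans)
qed (auto simp: inner_commute intro: dual_norm_le order_trans)

lemma dual_norm_scaleR_le: "dual_norm N (c *\<^sub>R y) \<le> \<bar>c\<bar> * dual_norm N y"
proof (rule dual_norm_le)
  fix x assume "N x \<le> 1"
  then have "N (sgn c *\<^sub>R x) \<le> 1" by (simp add: is_norm_scaleR sgn_if)
  have "x \<bullet> (c *\<^sub>R y) = \<bar>c\<bar> * ((sgn c *\<^sub>R x) \<bullet> y)"
    by (simp only: inner_scaleR_left inner_scaleR_right mult.assoc[symmetric] abs_mult_sgn)
  also have "\<dots> \<le> \<bar>c\<bar> * dual_norm N y"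
    using dual_norm_ge[OF \<open>N (sgn c *\<^sub>R x) \<le> 1\<close>] by (rule mult_left_mono) simp
  finally show "x \<bullet> (c *\<^sub>R y) \<le> \<bar>c\<bar> * dual_norm N y" .
qed

lemma is_norm_dual_norm: "is_norm (dual_norm N)"
proof -
  have nonneg: "0 \<le> dual_norm N y" for y using dual_norm_ge[of 0 y] by simp
  have zero: "dual_norm N 0 = 0"
    using nonneg[of 0] dual_norm_scaleR_le[of 0 0] by simp
  have pos: "0 < dual_norm N y" if "y \<noteq> 0" for y
  proof -
    have "0 < ((1 / N y) *\<^sub>R y) \<bullet> y" using is_norm_pos[OF that] that by simp
    also have "\<dots> \<le> dual_norm N y"
      using is_norm_pos[OF that] by (intro dual_norm_ge) (simp add: is_norm_scaleR)
    finally show ?thesis .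
  qed
  have scale: "dual_norm N (c *\<^sub>R y) = \<bar>c\<bar> * dual_norm N y" for c y
  proof (cases "c = 0")
    case False
    have "dual_norm N y \<le> \<bar>1 / c\<bar> * dual_norm N (c *\<^sub>R y)"
      using dual_norm_scaleR_le[of "1 / c" "c *\<^sub>R y"] False by simp
    with False dual_norm_scaleR_le[of c y] show ?thesis by (simp add: field_simps)
  qed (simp add: zero)
  have triangle: "dual_norm N (y + z) \<le> dual_norm N y + dual_norm N z" for y z
    by (rule dual_norm_le) (auto simp: inner_add_right intro: add_mono dual_norm_ge)
  have eq_0_iff: "dual_norm N y = 0 \<longleftrightarrow> y = 0" for y
    using zero pos[of y] by (cases "y = 0") simp_all
  show ?thesis
    unfolding is_norm_def by (simp add: nonneg scale triangle eq_0_iff)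
qed

end

section \<open>Gradients and norming functionals\<close>

lemma has_grad_along_line:
  assumes "has_grad h v (y + t *\<^sub>R u)"
  shows "((\<lambda>s. h (y + s *\<^sub>R u)) has_field_derivative v \<bullet> u) (at t)"
proof -
  have "((\<lambda>s. y + s *\<^sub>R u) has_derivative (\<lambda>s. s *\<^sub>R u)) (at t)"
    by (auto intro!: derivative_eq_intros)
  from has_derivative_compose[OF this assms[unfolded has_grad_def]]
  have "((\<lambda>s. h (y + s *\<^sub>R u)) has_derivative (\<lambda>s. v \<bullet> (s *\<^sub>R u))) (at t)" .
  moreover have "(\<lambda>s. v \<bullet> (s *\<^sub>R u)) = (*) (v \<bullet> u)" by (auto simp: mult.commute)
  ultimately show ?thesis by (simp add: has_field_derivative_def)
qed

lemma has_grad_unique: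
  assumes "has_grad h v x" and "has_grad h w x"
  shows "v = w"
proof -
  have "(\<lambda>u. v \<bullet> u) = (\<lambda>u. w \<bullet> u)"
    using assms unfolding has_grad_def by (rule has_derivative_unique)
  then have "(v - w) \<bullet> (v - w) = 0" by (metis inner_diff_left right_minus_eq)
  then show ?thesis by simp
qed

lemma ex_has_grad_if_differentiable:
  fixes h :: "real^'n \<Rightarrow> real"
  assumes "h differentiable (at x)"
  shows "\<exists>v. has_grad h v x"
proof -
  obtain h' where h': "(h has_derivative h') (at x)" using assms by (auto simp: differentiable_def)
  then have "h' = (\<lambda>u. adjoint h' 1 \<bullet> u)"
    using adjoint_works[OF has_derivative_linear[OF h']] by (auto simp: inner_commute)
  with h' show ?thesis unfolding has_grad_def by metis
qed

lemma borel_measurable_has_grad: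
  assumes "\<And>y. has_grad h (Dh y) y"
  shows "h \<in> borel_measurable borel"
  using assms unfolding has_grad_def
  by (meson borel_measurable_continuous_onI continuous_at_imp_continuous_on has_derivative_continuous)

lemma borel_measurable_grad:
  fixes f :: "real^'n \<Rightarrow> real"
  assumes grad: "\<And>y. has_grad f (Df y) y"
  shows "Df \<in> borel_measurable borel"
proof -
  have [measurable]: "f \<in> borel_measurable borel" using grad by (rule borel_measurable_has_grad)
  define t :: "nat \<Rightarrow> real" where "t k = inverse (real (Suc k))" for k
  have t: "filterlim t (at 0) sequentially"
    unfolding t_def by (intro filterlim_atI LIMSEQ_inverse_real_of_nat) simp
  have "(\<lambda>y. Df y \<bullet> b) \<in> borel_measurable borel" for b
  proof (rule borel_measurable_LIMSEQ_real[where u = "\<lambda>k y. (f (y + t k *\<^sub>R b) - f y) / t k"])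
    fix y
    have "((\<lambda>s. f (y + s *\<^sub>R b)) has_field_derivative Df y \<bullet> b) (at 0)"
      by (rule has_grad_along_line) (simp add: grad)
    then have "((\<lambda>s. (f (y + s *\<^sub>R b) - f y) / s) \<longlongrightarrow> Df y \<bullet> b) (at 0)"
      by (simp add: has_field_derivative_iff)
    from filterlim_compose[OF this t]
    show "(\<lambda>k. (f (y + t k *\<^sub>R b) - f y) / t k) \<longlonglongrightarrow> Df y \<bullet> b" .
  next
    fix k
    show "(\<lambda>y. (f (y + t k *\<^sub>R b) - f y) / t k) \<in> borel_measurable borel" by measurable
  qed
  then show ?thesis by (rule borel_measurable_euclidean_space[THEN iffD2, OF ballI])
qed

definition norming_functional :: "(real^'n \<Rightarrow> real) \<Rightarrow> real^'n \<Rightarrow> real^'n \<Rightarrow> bool" where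
  "norming_functional N x z \<longleftrightarrow> z \<bullet> x = N x \<and> (\<forall>u. z \<bullet> u \<le> N u)"

context
  fixes N :: "real^'n \<Rightarrow> real"
  assumes N: "is_norm N"
begin

declare is_norm_zero[OF N, simp] is_norm_minus[OF N, simp]

lemma has_grad_is_norm_le:
  assumes "has_grad N v x"
  shows "N x + v \<bullet> (y - x) \<le> N y"
proof -
  define \<phi> where "\<phi> t = N (x + t *\<^sub>R (y - x))" for t
  have "convex_on UNIV \<phi>"
  proof (rule convex_onI)
    fix t a b :: real assume "0 < t" "t < 1"
    have "x + ((1 - t) *\<^sub>R a + t *\<^sub>R b) *\<^sub>R (y - x)
        = (1 - t) *\<^sub>R (x + a *\<^sub>R (y - x)) + t *\<^sub>R (x + b *\<^sub>R (y - x))"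
      by (simp add: algebra_simps)
    then show "\<phi> ((1 - t) *\<^sub>R a + t *\<^sub>R b) \<le> (1 - t) * \<phi> a + t * \<phi> b"
      using convex_onD[OF convex_on_is_norm[OF N], of t] \<open>0 < t\<close> \<open>t < 1\<close> by (simp add: \<phi>_def)
  qed simp
  moreover have "(\<phi> has_field_derivative v \<bullet> (y - x)) (at 0)"
    unfolding \<phi>_def by (rule has_grad_along_line) (simp add: assms)
  ultimately have "v \<bullet> (y - x) * (1 - 0) \<le> \<phi> 1 - \<phi> 0"
    by (intro convex_on_imp_above_tangent) auto
  then show ?thesis by (simp add: \<phi>_def)
qed

lemma norming_functional_has_grad:
  assumes "has_grad N v x"
  shows "norming_functional N x v"
proof -
  have "v \<bullet> u \<le> N u" for u
    using has_grad_is_norm_le[OF assms, of "x + u"] is_norm_triangle[OF N, of x u] by simp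
  moreover have "N x \<le> v \<bullet> x"
    using has_grad_is_norm_le[OF assms, of 0] by simp
  ultimately show ?thesis unfolding norming_functional_def by (meson antisym)
qed

lemma dual_norm_norming_functional:
  assumes z: "norming_functional N x z" and "x \<noteq> 0"
  shows "dual_norm N z = 1"
proof (rule antisym)
  show "dual_norm N z \<le> 1" using z dual_norm_le_1_iff[OF N] by (simp add: norming_functional_def)
  have pos: "0 < N x" using is_norm_pos[OF N \<open>x \<noteq> 0\<close>] .
  have "((1 / N x) *\<^sub>R x) \<bullet> z \<le> dual_norm N z"
    by (rule dual_norm_ge[OF N]) (use pos in \<open>simp add: is_norm_scaleR[OF N]\<close>)
  then show "1 \<le> dual_norm N z" using z pos by (simp add: norming_functional_def inner_commute)
qed

text \<open>Hahn--Banach: separate the open unit ball of \<open>N\<close> from the unit vector in direction \<open>x\<close>.\<close>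
lemma ex_norming_functional: "\<exists>z. norming_functional N x z"
proof (cases "x = 0")
  case True
  then show ?thesis by (auto simp: norming_functional_def is_norm_nonneg[OF N] intro!: exI[of _ 0])
next
  case False
  have Nx: "0 < N x" using is_norm_pos[OF N False] .
  define x0 where "x0 = (1 / N x) *\<^sub>R x"
  have "N x0 = 1" using Nx by (simp add: x0_def is_norm_scaleR[OF N])
  have "convex {u. N u < 1}"
  proof (rule convexI, clarsimp)
    fix u w and s t :: real assume "N u < 1" "N w < 1" "0 \<le> s" "0 \<le> t" "s + t = 1"
    then have "N (s *\<^sub>R u + t *\<^sub>R w) \<le> s * N u + t * N w"
      using is_norm_triangle[OF N, of "s *\<^sub>R u" "t *\<^sub>R w"] by (simp add: is_norm_scaleR[OF N])
    also have "\<dots> < 1" by (rule convex_bound_lt) fact+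
    finally show "N (s *\<^sub>R u + t *\<^sub>R w) < 1" .
  qed
  moreover have "{u. N u < 1} \<noteq> {}" by (auto intro!: exI[of _ 0])
  moreover have "{u. N u < 1} \<inter> {x0} = {}" using \<open>N x0 = 1\<close> by auto
  ultimately obtain a b where ab: "a \<noteq> 0" "\<And>u. N u < 1 \<Longrightarrow> a \<bullet> u \<le> b" "b \<le> a \<bullet> x0"
    using separating_hyperplane_sets[of "{u. N u < 1}" "{x0}"] by auto
  have le: "a \<bullet> u \<le> b * N u" for u
  proof (rule field_le_mult_one_interval)
    fix s :: real assume s: "0 < s" "s < 1"
    show "s * (a \<bullet> u) \<le> b * N u"
    proof (cases "u = 0")
      case False
      with is_norm_pos[OF N] have Nu: "0 < N u" by blast
      then have "a \<bullet> ((s / N u) *\<^sub>R u) \<le> b"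
        using s by (intro ab(2)) (simp add: is_norm_scaleR[OF N])
      then show ?thesis using Nu by (simp add: field_simps)
    qed simp
  qed
  have "0 < b * N a" using le[of a] ab(1) inner_gt_zero_iff[of a] by linarith
  then have b: "0 < b" using is_norm_nonneg[OF N, of a] by (simp add: zero_less_mult_iff)
  show ?thesis
  proof (intro exI[of _ "(1 / b) *\<^sub>R a"])
    have "N x \<le> ((1 / b) *\<^sub>R a) \<bullet> x" using ab(3) b Nx by (simp add: x0_def field_simps)
    moreover have "((1 / b) *\<^sub>R a) \<bullet> u \<le> N u" for u using le[of u] b by (simp add: field_simps)
    ultimately show "norming_functional N x ((1 / b) *\<^sub>R a)"
      unfolding norming_functional_def by (meson antisym)
  qed
qed

lemma norming_functional_unique:
  assumes sc: "strictly_convex_norm (dual_norm N)" and x: "x \<noteq> 0"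
    and z1: "norming_functional N x z1" and z2: "norming_functional N x z2"
  shows "z1 = z2"
proof (rule ccontr)
  assume "z1 \<noteq> z2"
  define m where "m = (1 - 1/2) *\<^sub>R z1 + (1/2) *\<^sub>R z2"
  have "z1 \<in> {z. dual_norm N z \<le> 1}" "z2 \<in> {z. dual_norm N z \<le> 1}"
    using z1 z2 dual_norm_le_1_iff[OF N] by (auto simp: norming_functional_def)
  with sc \<open>z1 \<noteq> z2\<close> have "m \<in> interior {z. dual_norm N z \<le> 1}"
    unfolding strictly_convex_norm_def strictly_convex_set_def m_def
    by (metis field_sum_of_halves half_gt_zero less_add_same_cancel1 zero_less_one)
  then obtain e where e: "e > 0" "ball m e \<subseteq> {z. dual_norm N z \<le> 1}"
    using mem_interior by blast
  define m' where "m' = m + (e / 2 / norm x) *\<^sub>R x"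
  have "dist m m' < e" using e x by (simp add: m'_def dist_norm)
  then have "m' \<bullet> x \<le> N x" using e(2) dual_norm_le_1_iff[OF N] by auto
  moreover have "m \<bullet> x = N x" using z1 z2 by (simp add: m_def inner_add_left norming_functional_def)
  then have "m' \<bullet> x = N x + e / 2 * norm x"
    using x by (simp add: m'_def inner_add_left dot_square_norm power2_eq_square)
  moreover have "0 < e * norm x" using e x by simp
  ultimately show False by linarith
qed

lemma norm_norming_functional_le: "\<exists>C. \<forall>x z. norming_functional N x z \<longrightarrow> norm z \<le> C"
proof -
  obtain c where c: "c > 0" "\<And>z. c * norm z \<le> dual_norm N z"
    using is_norm_ge_norm[OF is_norm_dual_norm[OF N]] by blast
  have "norm z \<le> 1 / c" if "norming_functional N x z" for x z
    using c(2)[of z] dual_norm_le_1_iff[OF N, of z] that c(1)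
    by (simp add: norming_functional_def field_simps)
  then show ?thesis by blast
qed

lemma closed_norming_functional_graph: "closed {(x, z). norming_functional N x z}"
proof -
  have "{(x, z). norming_functional N x z}
      = {p. snd p \<bullet> fst p = N (fst p)} \<inter> (\<Inter>u. {p. snd p \<bullet> u \<le> N u})"
    by (auto simp: norming_functional_def)
  moreover have "closed {p :: (real^'n) \<times> (real^'n). snd p \<bullet> fst p = N (fst p)}"
    by (intro closed_Collect_eq continuous_intros continuous_on_compose2[OF continuous_on_is_norm[OF N]]) auto
  moreover have "closed {p :: (real^'n) \<times> (real^'n). snd p \<bullet> u \<le> N u}" for u
    by (intro closed_Collect_le continuous_intros)
  ultimately show ?thesis by (simp add: closed_Int closed_INT)
qed

text \<open>With a strictly convex dual norm every nonzero point has a unique norming functional; it then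
  depends continuously on the point (closed graph, bounded range), and a continuous choice of
  subgradients of a convex function is its gradient.\<close>
lemma has_grad_is_norm_if_strictly_convex_dual:
  assumes sc: "strictly_convex_norm (dual_norm N)" and x: "x \<noteq> 0" and w: "norming_functional N x w"
  shows "has_grad N w x"
proof -
  define \<sigma> where "\<sigma> y = (SOME z. norming_functional N y z)" for y
  have \<sigma>: "norming_functional N y (\<sigma> y)" for y
    unfolding \<sigma>_def using ex_norming_functional by (rule someI_ex)
  obtain C where C: "\<And>y. norm (\<sigma> y) \<le> C" using norm_norming_functional_le \<sigma> by blast
  let ?S = "- {0 :: real^'n}"
  have graph: "(\<lambda>y. (y, \<sigma> y)) ` ?S = (?S \<times> cball 0 C) \<inter> {(y, z). norming_functional N y z}"
  proof (intro equalityI subsetI)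
    fix p assume "p \<in> (?S \<times> cball 0 C) \<inter> {(y, z). norming_functional N y z}"
    then obtain y z where p: "p = (y, z)" "y \<noteq> 0" "norming_functional N y z" by auto
    then have "z = \<sigma> y" using norming_functional_unique[OF sc p(2) _ \<sigma>] by blast
    with p show "p \<in> (\<lambda>y. (y, \<sigma> y)) ` ?S" by auto
  qed (use \<sigma> C in auto)
  have "continuous_on ?S \<sigma>"
  proof (rule continuous_closed_graph_eq[THEN iffD2])
    show "\<sigma> \<in> ?S \<rightarrow> cball 0 C" using C by auto
    show "closedin (top_of_set (?S \<times> cball 0 C)) ((\<lambda>y. (y, \<sigma> y)) ` ?S)"
      unfolding graph by (rule closedin_closed_Int[OF closed_norming_functional_graph])
  qed simp
  then have "isCont \<sigma> x" using x by (simp add: continuous_on_eq_continuous_at open_Compl)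
  moreover have "\<sigma> x = w" using norming_functional_unique[OF sc x \<sigma> w] .
  ultimately have cont: "\<exists>d>0. \<forall>y. dist y x < d \<longrightarrow> norm (\<sigma> y - w) < e" if "e > 0" for e
    using that unfolding continuous_at_eps_delta by (simp add: dist_norm)
  have bound: "\<bar>N y - N x - w \<bullet> (y - x)\<bar> \<le> norm (\<sigma> y - w) * norm (y - x)" for y
  proof -
    have "0 \<le> N y - N x - w \<bullet> (y - x)"
      using w by (simp add: norming_functional_def inner_diff_right)
    moreover have "N y - N x - w \<bullet> (y - x) \<le> (\<sigma> y - w) \<bullet> (y - x)"
      using \<sigma>[of y] w by (simp add: norming_functional_def inner_diff_right inner_diff_left)
    moreover have "(\<sigma> y - w) \<bullet> (y - x) \<le> norm (\<sigma> y - w) * norm (y - x)" by (rule norm_cauchy_schwarz)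
    ultimately show ?thesis by linarith
  qed
  show ?thesis
    unfolding has_grad_def has_derivative_at_alt
  proof (intro conjI bounded_linear_inner_right allI impI)
    fix e :: real assume "e > 0"
    then obtain d where d: "d > 0" "\<And>y. dist y x < d \<Longrightarrow> norm (\<sigma> y - w) < e" using cont by blast
    show "\<exists>d>0. \<forall>y. norm (y - x) < d \<longrightarrow> norm (N y - N x - w \<bullet> (y - x)) \<le> e * norm (y - x)"
    proof (intro exI[of _ d] conjI allI impI d(1))
      fix y assume "norm (y - x) < d"
      then have "norm (\<sigma> y - w) < e" using d(2) by (simp add: dist_norm)
      then have "norm (\<sigma> y - w) * norm (y - x) \<le> e * norm (y - x)"
        by (intro mult_right_mono) simp_all
      then show "norm (N y - N x - w \<bullet> (y - x)) \<le> e * norm (y - x)"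
        using bound[of y] by simp
    qed
  qed
qed

end

section \<open>Integration by parts against the radial field\<close>

lemma lborel_scaleR:
  assumes "c > 0"
  shows "(lborel :: (real^'n) measure) = density (distr lborel borel ((*\<^sub>R) c)) (\<lambda>_. ennreal (c ^ CARD('n)))"
  using lborel_affine[of c "0 :: real^'n"] assms by simp

lemma nn_integral_lborel_scaleR:
  fixes u :: "real^'n \<Rightarrow> ennreal"
  assumes c: "c > 0" and [measurable]: "u \<in> borel_measurable borel"
  shows "(\<integral>\<^sup>+x. u x \<partial>lborel) = ennreal (c ^ CARD('n)) * (\<integral>\<^sup>+x. u (c *\<^sub>R x) \<partial>lborel)"
  by (subst lborel_scaleR[OF c]) (simp add: nn_integral_density nn_integral_distr nn_integral_cmult)

lemma integrable_lborel_scaleR_iff: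
  fixes u :: "real^'n \<Rightarrow> real"
  assumes c: "c > 0" and [measurable]: "u \<in> borel_measurable borel"
  shows "integrable lborel (\<lambda>x. u (c *\<^sub>R x)) \<longleftrightarrow> integrable lborel u"
  using nn_integral_lborel_scaleR[OF c, of "\<lambda>x. ennreal (norm (u x))"] c
  by (auto simp: integrable_iff_bounded ennreal_mult_less_top)

lemma integral_lborel_scaleR:
  fixes u :: "real^'n \<Rightarrow> real"
  assumes c: "c > 0" and [measurable]: "u \<in> borel_measurable borel"
  shows "(\<integral>x. u (c *\<^sub>R x) \<partial>lborel) = (\<integral>x. u x \<partial>lborel) / c ^ CARD('n)"
proof -
  have "(\<integral>x. u x \<partial>lborel) = (\<integral>x. c ^ CARD('n) *\<^sub>R u x \<partial>distr lborel borel ((*\<^sub>R) c))"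
    using c by (subst lborel_scaleR[OF c]) (simp add: integral_density)
  also have "\<dots> = c ^ CARD('n) * (\<integral>x. u (c *\<^sub>R x) \<partial>lborel)"
    by (subst integral_distr) simp_all
  finally show ?thesis using c by (simp add: field_simps)
qed

lemma lborel_integral_Icc_FTC:
  fixes \<phi> \<phi>' :: "real \<Rightarrow> real"
  assumes "a \<le> b"
    and "\<And>s. a \<le> s \<Longrightarrow> s \<le> b \<Longrightarrow> (\<phi> has_real_derivative \<phi>' s) (at s)"
    and "integrable lborel (\<lambda>s. indicator {a..b} s * \<phi>' s)"
  shows "(\<integral>s. indicator {a..b} s * \<phi>' s \<partial>lborel) = \<phi> b - \<phi> a"
proof -
  have "(\<phi>' has_integral \<phi> b - \<phi> a) {a..b}"
    using assms(1,2) by (intro fundamental_theorem_of_calculus)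
      (auto intro: has_field_derivative_at_within simp: has_real_derivative_iff_has_vector_derivative[symmetric])
  moreover have "(\<lambda>s. indicator {a..b} s * \<phi>' s) = (\<lambda>s. if s \<in> {a..b} then \<phi>' s else 0)"
    by (auto simp: indicator_def)
  ultimately have "((\<lambda>s. indicator {a..b} s * \<phi>' s) has_integral \<phi> b - \<phi> a) UNIV"
    by (simp only: has_integral_restrict_UNIV)
  with has_integral_integral_lborel[OF assms(3)] show ?thesis
    by (rule has_integral_unique)
qed

lemma integrable_Icc_inverse_power:
  "integrable lborel (\<lambda>s::real. indicator {1..2} s * (1 / s ^ n))"
proof -
  have "continuous_on {1..2} (\<lambda>s::real. 1 / s ^ n)" by (intro continuous_intros) auto
  from borel_integrable_atLeastAtMost'[OF this] show ?thesis by (simp add: set_integrable_def)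
qed

lemma lborel_integral_Icc_inverse_power:
  assumes "n > 0"
  shows "(\<integral>s. indicator {1..2::real} s * (1 / s ^ (n + 1)) \<partial>lborel) = (1 - 1 / 2 ^ n) / n"
proof -
  obtain m where m: "n = Suc m" using assms gr0_conv_Suc by blast
  have "(\<integral>s. indicator {1..2::real} s * (1 / s ^ (n + 1)) \<partial>lborel)
      = (\<lambda>s. - 1 / (real n * s ^ n)) 2 - (\<lambda>s. - 1 / (real n * s ^ n)) 1"
  proof (rule lborel_integral_Icc_FTC[OF _ _ integrable_Icc_inverse_power])
    fix s :: real assume "1 \<le> s"
    then show "((\<lambda>s. - 1 / (real n * s ^ n)) has_real_derivative 1 / s ^ (n + 1)) (at s)"
      unfolding m by - (rule derivative_eq_intros refl | simp add: divide_simps)+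
  qed simp
  then show ?thesis using assms by (simp add: field_simps)
qed

lemma integral_lborel_dilations:
  fixes h :: "real^'n \<Rightarrow> real"
  assumes h: "integrable lborel h"
  defines "H \<equiv> \<lambda>s x. indicator {1..2::real} s * (h (s *\<^sub>R x) / s)"
  shows "integrable (lborel \<Otimes>\<^sub>M lborel) (\<lambda>(s, x). H s x)"
    and "(\<integral>s. (\<integral>x. H s x \<partial>lborel) \<partial>lborel)
       = (\<integral>x. h x \<partial>lborel) * ((1 - 1 / 2 ^ CARD('n)) / CARD('n))"
proof -
  have [measurable]: "h \<in> borel_measurable borel" using borel_measurable_integrable[OF h] by simp
  have scaled: "integrable lborel (\<lambda>x. u (s *\<^sub>R x) / s)"
      "(\<integral>x. u (s *\<^sub>R x) / s \<partial>lborel) = (\<integral>x. u x \<partial>lborel) / s ^ (CARD('n) + 1)"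
    if "s \<in> {1..2}" and [measurable]: "u \<in> borel_measurable borel" "integrable lborel u"
    for s and u :: "real^'n \<Rightarrow> real"
    using that integrable_lborel_scaleR_iff[of s u] integral_lborel_scaleR[of s u]
    by (auto simp: divide_divide_eq_left mult.commute)
  have inner: "(\<integral>x. H s x \<partial>lborel) = (\<integral>x. h x \<partial>lborel) * (indicator {1..2} s * (1 / s ^ (CARD('n) + 1)))"
    for s
  proof (cases "s \<in> {1..2}")
    case True
    then show ?thesis using scaled(2)[OF True _ h] by (simp add: H_def)
  qed (simp add: H_def)
  have inner_abs: "(\<integral>x. norm (H s x) \<partial>lborel)
      = (\<integral>x. \<bar>h x\<bar> \<partial>lborel) * (indicator {1..2} s * (1 / s ^ (CARD('n) + 1)))" for s
  proof (cases "s \<in> {1..2}")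
    case True
    then have "(\<lambda>x. norm (H s x)) = (\<lambda>x. \<bar>h (s *\<^sub>R x)\<bar> / s)" by (auto simp: H_def)
    then show ?thesis using True scaled[of s "\<lambda>x. \<bar>h x\<bar>"] h by simp
  qed (simp add: H_def)
  show "integrable (lborel \<Otimes>\<^sub>M lborel) (\<lambda>(s, x). H s x)"
  proof (rule lborel_pair.Fubini_integrable)
    show "integrable lborel (\<lambda>s. \<integral>x. norm (case (s, x) of (s, x) \<Rightarrow> H s x) \<partial>lborel)"
      unfolding case_prod_conv inner_abs by (intro integrable_mult_right integrable_Icc_inverse_power)
    show "AE s in lborel. integrable lborel (\<lambda>x. case (s, x) of (s, x) \<Rightarrow> H s x)"
    proof (rule AE_I2)
      fix s
      show "integrable lborel (\<lambda>x. case (s, x) of (s, x) \<Rightarrow> H s x)"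
      proof (cases "s \<in> {1..2}")
        case True
        then show ?thesis using scaled(1)[OF True _ h] by (simp add: H_def)
      qed (simp add: H_def)
    qed
  qed (simp add: H_def)
  show "(\<integral>s. (\<integral>x. H s x \<partial>lborel) \<partial>lborel)
      = (\<integral>x. h x \<partial>lborel) * ((1 - 1 / 2 ^ CARD('n)) / CARD('n))"
    unfolding inner integral_mult_right_zero
    by (simp only: lborel_integral_Icc_inverse_power[OF zero_less_card_finite])
qed

lemma integral_inner_grad_lborel:
  fixes f :: "real^'n \<Rightarrow> real"
  assumes grad: "\<And>y. has_grad f (Df y) y"
    and f: "integrable lborel f" and h: "integrable lborel (\<lambda>y. y \<bullet> Df y)"
  shows "(\<integral>y. y \<bullet> Df y \<partial>lborel) = - real CARD('n) * (\<integral>y. f y \<partial>lborel)"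
proof -
  have [measurable]: "f \<in> borel_measurable borel" using borel_measurable_integrable[OF f] by simp
  define H where "H s x = indicator {1..2::real} s * ((s *\<^sub>R x) \<bullet> Df (s *\<^sub>R x) / s)" for s x
  note dil = integral_lborel_dilations[OF h, folded H_def]
  have FTC: "(\<integral>s. H s x \<partial>lborel) = f (2 *\<^sub>R x) - f (1 *\<^sub>R x)" if "integrable lborel (\<lambda>s. H s x)" for x
  proof -
    have H: "(\<lambda>s. H s x) = (\<lambda>s. indicator {1..2} s * (x \<bullet> Df (s *\<^sub>R x)))"
      by (auto simp: H_def indicator_def fun_eq_iff)
    have "((\<lambda>s. f (s *\<^sub>R x)) has_real_derivative x \<bullet> Df (s *\<^sub>R x)) (at s)" for s
      using has_grad_along_line[of f "Df (s *\<^sub>R x)" 0 s x] grad by (simp add: inner_commute)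
    then show ?thesis
      unfolding H using that[unfolded H] by (intro lborel_integral_Icc_FTC) simp_all
  qed
  have "(\<integral>y. y \<bullet> Df y \<partial>lborel) * ((1 - 1 / 2 ^ CARD('n)) / CARD('n))
      = (\<integral>x. (\<integral>s. H s x \<partial>lborel) \<partial>lborel)"
    using lborel_pair.Fubini_integral[OF dil(1)] dil(2) by simp
  also have "\<dots> = (\<integral>x. f (2 *\<^sub>R x) - f x \<partial>lborel)"
  proof (rule integral_cong_AE)
    have "integrable lborel (\<lambda>x. \<integral>s. H s x \<partial>lborel)"
      using lborel_pair.integrable_snd[OF dil(1)] by simp
    then show "(\<lambda>x. \<integral>s. H s x \<partial>lborel) \<in> borel_measurable lborel"
      by (rule borel_measurable_integrable)
    show "AE x in lborel. (\<integral>s. H s x \<partial>lborel) = f (2 *\<^sub>R x) - f x"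
      using lborel_pair.AE_integrable_snd[OF dil(1)] by eventually_elim (simp add: FTC)
  qed simp
  also have "\<dots> = (\<integral>x. f x \<partial>lborel) / 2 ^ CARD('n) - (\<integral>x. f x \<partial>lborel)"
    using f integrable_lborel_scaleR_iff[of 2 f] integral_lborel_scaleR[of 2 f] by simp
  finally have "(\<integral>y. y \<bullet> Df y \<partial>lborel) / CARD('n) * (1 - 1 / 2 ^ CARD('n))
      = - (\<integral>x. f x \<partial>lborel) * (1 - 1 / 2 ^ CARD('n))"
    by (simp add: algebra_simps)
  moreover have "1 - 1 / 2 ^ CARD('n) \<noteq> (0::real)"
    using power_inject_exp[of "2::real" "CARD('n)" 0] by auto
  ultimately have "(\<integral>y. y \<bullet> Df y \<partial>lborel) / CARD('n) = - (\<integral>x. f x \<partial>lborel)"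
    using mult_right_cancel by blast
  then show ?thesis by (simp add: divide_eq_eq)
qed

lemma countable_isolated_real:
  fixes E :: "real set"
  assumes "\<And>s. s \<in> E \<Longrightarrow> \<exists>e>0. \<forall>t\<in>E. \<bar>t - s\<bar> < e \<longrightarrow> t = s"
  shows "countable E"
proof -
  obtain e where e: "\<And>s. s \<in> E \<Longrightarrow> e s > 0 \<and> (\<forall>t\<in>E. \<bar>t - s\<bar> < e s \<longrightarrow> t = s)"
    using assms by metis
  have "\<exists>q\<in>\<rat>. s - e s / 2 < q \<and> q < s + e s / 2" if "s \<in> E" for s
    using Rats_dense_in_real[of "s - e s / 2" "s + e s / 2"] e[OF that] by auto
  then obtain q where q: "\<And>s. s \<in> E \<Longrightarrow> q s \<in> \<rat> \<and> \<bar>q s - s\<bar> < e s / 2"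
    by (metis abs_diff_less_iff)
  have "inj_on q E"
  proof (rule inj_onI)
    fix s t assume s: "s \<in> E" and t: "t \<in> E" and "q s = q t"
    then have "\<bar>t - s\<bar> < e s / 2 + e t / 2" using q[OF s] q[OF t] by linarith
    then show "s = t"
      using e[OF s] e[OF t] s t by (cases "e t \<le> e s") (auto simp: abs_minus_commute)
  qed
  moreover have "q ` E \<subseteq> \<rat>" using q by auto
  ultimately show ?thesis
    using countable_rat countable_subset countable_image_inj_on by blast
qed

lemma isolated_zero_if_deriv_nonzero:
  fixes \<phi> :: "real \<Rightarrow> real"
  assumes "(\<phi> has_field_derivative d) (at s)" and "\<phi> s = 0" and "d \<noteq> 0"
  shows "\<exists>e>0. \<forall>t. t \<noteq> s \<and> \<bar>t - s\<bar> < e \<longrightarrow> \<phi> t \<noteq> 0"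
proof -
  have "((\<lambda>t. (\<phi> t - \<phi> s) / (t - s)) \<longlongrightarrow> d) (at s)"
    using assms(1) has_field_derivative_iff by blast
  then have "eventually (\<lambda>t. (\<phi> t - \<phi> s) / (t - s) \<noteq> 0) (at s)"
    using assms(3) tendsto_imp_eventually_ne by blast
  then obtain e where "e > 0" "\<And>t. t \<noteq> s \<Longrightarrow> dist t s < e \<Longrightarrow> (\<phi> t - \<phi> s) / (t - s) \<noteq> 0"
    unfolding eventually_at by blast
  then show ?thesis using assms(2) by (intro exI[of _ e]) (auto simp: dist_real_def)
qed

text \<open>On every ray the zeros of \<open>f\<close> at which the radial derivative does not vanish are isolated,
  hence countable; integrating over the dilations \<open>s \<in> [1, 2]\<close> shows that the set is null.\<close>
lemma null_sets_zeros_nonzero_radial_grad: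
  fixes f :: "real^'n \<Rightarrow> real"
  assumes grad: "\<And>y. has_grad f (Df y) y"
  shows "{y. f y = 0 \<and> y \<bullet> Df y \<noteq> 0} \<in> null_sets lborel"
proof -
  have [measurable]: "f \<in> borel_measurable borel" using grad by (rule borel_measurable_has_grad)
  have [measurable]: "Df \<in> borel_measurable borel" using grad by (rule borel_measurable_grad)
  define Z where "Z = {y. f y = 0 \<and> y \<bullet> Df y \<noteq> 0}"
  have [measurable]: "Z \<in> sets borel" unfolding Z_def by measurable
  define G :: "real \<Rightarrow> real^'n \<Rightarrow> ennreal" where
    "G s x = indicator {1..2::real} s * indicator Z (s *\<^sub>R x)" for s x
  have G[measurable]: "(\<lambda>(s, x). G s x) \<in> borel_measurable (lborel \<Otimes>\<^sub>M lborel)"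
    unfolding G_def by measurable
  have "countable {s \<in> {1..2}. s *\<^sub>R x \<in> Z}" for x
  proof (rule countable_isolated_real)
    fix s assume "s \<in> {s \<in> {1..2}. s *\<^sub>R x \<in> Z}"
    then have "f (s *\<^sub>R x) = 0" "x \<bullet> Df (s *\<^sub>R x) \<noteq> 0" by (auto simp: Z_def)
    moreover have "((\<lambda>s. f (s *\<^sub>R x)) has_field_derivative x \<bullet> Df (s *\<^sub>R x)) (at s)"
      using has_grad_along_line[of f "Df (s *\<^sub>R x)" 0 s x] grad by (simp add: inner_commute)
    ultimately obtain e where "e > 0" "\<And>t. t \<noteq> s \<and> \<bar>t - s\<bar> < e \<longrightarrow> f (t *\<^sub>R x) \<noteq> 0"
      using isolated_zero_if_deriv_nonzero by blast
    then show "\<exists>e>0. \<forall>t\<in>{s \<in> {1..2}. s *\<^sub>R x \<in> Z}. \<bar>t - s\<bar> < e \<longrightarrow> t = s"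
      by (auto simp: Z_def)
  qed
  then have inner: "(\<integral>\<^sup>+s. G s x \<partial>lborel) = 0" for x
  proof -
    have "(\<integral>\<^sup>+s. G s x \<partial>lborel) = (\<integral>\<^sup>+s. indicator {s \<in> {1..2}. s *\<^sub>R x \<in> Z} s \<partial>lborel)"
      by (intro nn_integral_cong) (auto simp: G_def indicator_def)
    also have "\<dots> = emeasure lborel {s \<in> {1..2}. s *\<^sub>R x \<in> Z}"
      by (intro nn_integral_indicator) measurable
    also have "\<dots> = 0"
      using countable_imp_null_set_lborel[OF \<open>countable {s \<in> {1..2}. s *\<^sub>R x \<in> Z}\<close>] by auto
    finally show ?thesis .
  qed
  have "(\<integral>\<^sup>+s. (\<integral>\<^sup>+x. G s x \<partial>lborel) \<partial>lborel) = (\<integral>\<^sup>+x. (\<integral>\<^sup>+s. G s x \<partial>lborel) \<partial>lborel)"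
    using lborel_pair.Fubini'[OF G] by simp
  then have "AE s in lborel. (\<integral>\<^sup>+x. G s x \<partial>lborel) = 0"
    by (simp add: inner nn_integral_0_iff_AE)
  then obtain Ns where Ns: "{s. (\<integral>\<^sup>+x. G s x \<partial>lborel) \<noteq> 0} \<subseteq> Ns" "Ns \<in> null_sets lborel"
    by (auto elim!: AE_E simp: null_sets_def)
  have "\<not> {1..2::real} \<subseteq> Ns"
  proof
    assume "{1..2::real} \<subseteq> Ns"
    from null_sets_subset[OF Ns(2) _ this] have "{1..2::real} \<in> null_sets lborel" by simp
    then show False by (simp add: null_sets_def)
  qed
  then obtain s where s: "s \<in> {1..2::real}" "(\<integral>\<^sup>+x. G s x \<partial>lborel) = 0" using Ns(1) by blast
  then have "(\<integral>\<^sup>+x. indicator Z x \<partial>lborel) = 0"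
    using nn_integral_lborel_scaleR[of s "indicator Z"] by (simp add: G_def)
  then show ?thesis using \<open>Z \<in> sets borel\<close> by (simp add: Z_def null_sets_def)
qed

section \<open>The equality case of Young's inequality\<close>

lemma powr_less_tangent_line:
  fixes r t :: real
  assumes r: "r > 0" "r \<noteq> 1" and t: "0 < t" "t < 1"
  shows "r powr t < 1 + t * (r - 1)"
proof -
  define h where "h x = 1 + t * (x - 1) - x powr t" for x :: real
  define h' where "h' x = t - t * x powr (t - 1)" for x :: real
  have deriv: "(h has_real_derivative h' x) (at x)" if "x > 0" for x
    unfolding h_def h'_def using that by (auto intro!: derivative_eq_intros simp: powr_diff)
  have "h 1 = 0" by (simp add: h_def)
  consider "1 < r" | "r < 1" using r by linarith
  then have "h r > 0"
  proof cases
    case 1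
    then obtain z where z: "1 < z" "z < r" "h r - h 1 = (r - 1) * h' z"
      using MVT2[OF 1, of h h'] deriv by force
    have "z powr (t - 1) < 1" using z t by (intro powr_less_one) auto
    then show ?thesis using z t \<open>h 1 = 0\<close> 1 by (simp add: h'_def)
  next
    case 2
    then obtain z where z: "r < z" "z < 1" "h 1 - h r = (1 - r) * h' z"
      using MVT2[OF 2, of h h'] deriv r by force
    have "1 < z powr (t - 1)" using z t r powr_less_mono2_neg[of "t - 1" z 1] by simp
    then have "(1 - r) * h' z < 0" using t 2 by (simp add: h'_def mult_pos_neg)
    then show ?thesis using z \<open>h 1 = 0\<close> by simp
  qed
  then show ?thesis by (simp add: h_def)
qed

lemma Youngs_inequality_eq_imp:
  fixes p q a b :: real
  assumes pq: "p > 1" "q > 1" "1 / p + 1 / q = 1" and ab: "a \<ge> 0" "b \<ge> 0"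
    and eq: "a * b = a powr p / p + b powr q / q"
  shows "a powr p = b powr q"
proof (cases "a = 0 \<or> b = 0")
  case True
  with eq pq show ?thesis by auto
next
  case False
  with ab have "a > 0" "b > 0" by auto
  define X where "X = a powr p"
  define Y where "Y = b powr q"
  have "X > 0" "Y > 0" using \<open>a > 0\<close> \<open>b > 0\<close> by (auto simp: X_def Y_def)
  have ab_XY: "a * b = X * (Y / X) powr (1 / q)"
  proof -
    have q: "1 / p = 1 - 1 / q" using pq(3) by linarith
    have "a * b = X powr (1 / p) * Y powr (1 / q)"
      using \<open>a > 0\<close> \<open>b > 0\<close> pq by (simp add: X_def Y_def powr_powr)
    also have "\<dots> = X * (Y / X) powr (1 / q)"
      using \<open>X > 0\<close> \<open>Y > 0\<close> by (simp add: q powr_diff powr_divide)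
    finally show ?thesis .
  qed
  show ?thesis
  proof (rule ccontr)
    assume "a powr p \<noteq> b powr q"
    then have "Y / X \<noteq> 1" using \<open>X > 0\<close> by (simp add: X_def Y_def)
    then have "(Y / X) powr (1 / q) < 1 + (1 / q) * (Y / X - 1)"
      using \<open>X > 0\<close> \<open>Y > 0\<close> pq by (intro powr_less_tangent_line) auto
    then have "a * b < X * (1 + (1 / q) * (Y / X - 1))"
      unfolding ab_XY using \<open>X > 0\<close> by simp
    also have "\<dots> = X * (1 - 1 / q) + Y / q"
      using \<open>X > 0\<close> pq(2) by (simp add: field_simps)
    also have "1 - 1 / q = 1 / p" using pq(3) by linarith
    also have "X * (1 / p) + Y / q = X / p + Y / q" by simp
    finally show False using eq by (simp add: X_def Y_def)
  qed
qed

section \<open>Almost-everywhere equality and essential suprema\<close>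

lemma AE_neq_lebesgue: "AE y in lebesgue. y \<noteq> (a :: 'a :: euclidean_space)"
proof -
  have "{a} \<in> null_sets lebesgue"
    using countable_imp_null_set_lborel[of "{a}"] by (simp add: null_sets_completionI)
  from AE_not_in[OF this] show ?thesis by simp
qed

lemma AE_eq_if_integral_le_mono:
  fixes u w :: "'a \<Rightarrow> real"
  assumes "integrable M u" "integrable M w" "AE x in M. u x \<le> w x"
    and "integral\<^sup>L M w \<le> integral\<^sup>L M u"
  shows "AE x in M. u x = w x"
proof -
  have "integral\<^sup>L M (\<lambda>x. w x - u x) = 0"
    using assms integral_mono_AE[OF assms(1-3)] by simp
  moreover have "AE x in M. 0 \<le> w x - u x" using assms(3) by eventually_elim simp
  ultimately have "AE x in M. w x - u x = 0"
    using integral_nonneg_eq_0_iff_AE[of M "\<lambda>x. w x - u x"] assms(1,2) by simp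
  then show ?thesis by eventually_elim simp
qed

lemma AE_le_ess_sup_wrt:
  assumes "\<exists>c. AE x in lebesgue. x \<in> X \<and> 0 < g x \<longrightarrow> D x \<le> c"
  shows "AE x in lebesgue. x \<in> X \<and> 0 < g x \<longrightarrow> D x \<le> ess_sup_wrt X g D"
proof -
  define S where "S = {c. AE x in lebesgue. x \<in> X \<and> 0 < g x \<longrightarrow> D x \<le> c}"
  have "S \<noteq> {}" using assms by (auto simp: S_def)
  have "AE x in lebesgue. x \<in> X \<and> 0 < g x \<longrightarrow> D x \<le> Inf S + 1 / Suc k" for k :: nat
  proof -
    obtain c where "c \<in> S" "c < Inf S + 1 / Suc k"
      using cInf_lessD[OF \<open>S \<noteq> {}\<close>, of "Inf S + 1 / Suc k"] by auto
    then show ?thesis by (auto simp: S_def elim!: eventually_mono)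
  qed
  then have "AE x in lebesgue. \<forall>k::nat. x \<in> X \<and> 0 < g x \<longrightarrow> D x \<le> Inf S + 1 / Suc k"
    unfolding AE_all_countable by blast
  then show ?thesis
  proof eventually_elim
    case (elim x)
    show ?case
    proof
      assume "x \<in> X \<and> 0 < g x"
      then have le: "D x - Inf S \<le> 1 / Suc k" for k :: nat using spec[OF elim, of k] by linarith
      have "D x \<le> Inf S"
      proof (rule ccontr)
        assume "\<not> D x \<le> Inf S"
        then obtain k :: nat where "1 / Suc k < D x - Inf S"
          by (metis diff_gt_0_iff_gt not_le nat_approx_posE)
        then show False using le[of k] by simp
      qed
      then show "D x \<le> ess_sup_wrt X g D" by (simp add: ess_sup_wrt_def S_def)
    qed
  qed
qed

lemma ess_sup_wrt_eqI:
  assumes "AE x in lebesgue. x \<in> X \<and> 0 < g x \<longrightarrow> D x \<le> K"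
    and "\<And>c. AE x in lebesgue. x \<in> X \<and> 0 < g x \<longrightarrow> D x \<le> c \<Longrightarrow> K \<le> c"
  shows "ess_sup_wrt X g D = K"
  unfolding ess_sup_wrt_def using assms by (intro cInf_eq_minimum) auto

section \<open>The moment inequality and its equality cases\<close>

locale uncertainty_setting =
  fixes X :: "(real^'n) set"
    and f g :: "real^'n \<Rightarrow> real"
    and grad :: "real^'n \<Rightarrow> real^'n"
    and N :: "real^'n \<Rightarrow> real"
    and \<alpha> :: real
  assumes X_meas[measurable]: "X \<in> sets lebesgue"
    and f_int: "set_integrable lebesgue X f" and f_int_1: "(\<integral>x\<in>X. f x \<partial>lebesgue) = 1"
    and g_nonneg: "\<forall>x\<in>X. 0 \<le> g x" and g_int_1: "(\<integral>x\<in>X. g x \<partial>lebesgue) = 1"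
    and g_meas[measurable]: "g \<in> borel_measurable lebesgue"
    and f_outside: "\<forall>x. x \<notin> X \<longrightarrow> f x = 0"
    and f_diff: "\<forall>x\<in>X. has_grad f (grad x) x"
    and f_bdry: "\<forall>x\<in>frontier X. f differentiable (at x)"
    and abs_cont: "AE x in lebesgue. x \<in> X \<and> g x = 0 \<longrightarrow> grad x = 0"
    and N_norm: "is_norm N"
    and alpha: "1 \<le> \<alpha>"
    and int1: "set_integrable lebesgue X (\<lambda>x. N x powr \<alpha> * g x)"
    and int2: "\<alpha> \<noteq> 1 \<Longrightarrow> set_integrable lebesgue X
                 (\<lambda>x. dual_norm N ((1 / g x) *\<^sub>R grad x) powr (\<alpha> / (\<alpha> - 1)) * g x)"
    and bnd2: "\<alpha> = 1 \<Longrightarrow> \<exists>c. AE x in lebesgue. x \<in> X \<and> 0 < g x \<longrightarrow> dual_norm N ((1 / g x) *\<^sub>R grad x) \<le> c"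
begin

lemma ex_has_grad: "\<exists>v. has_grad f v y"
proof -
  consider "y \<in> X" | "y \<in> frontier X" | "y \<in> - closure X" using closure_Un_frontier by blast
  then show ?thesis
  proof cases
    case 3
    have "(f has_derivative (\<lambda>u. 0 \<bullet> u)) (at y)"
    proof (rule has_derivative_transform_within_open)
      show "((\<lambda>_. 0) has_derivative (\<lambda>u. 0 \<bullet> u)) (at y)" by simp
      show "\<And>x. x \<in> - closure X \<Longrightarrow> 0 = f x" using f_outside closure_subset by auto
    qed (use 3 in auto)
    then show ?thesis unfolding has_grad_def by blast
  qed (use f_diff f_bdry ex_has_grad_if_differentiable in blast)+
qed

definition Df :: "real^'n \<Rightarrow> real^'n" where "Df y = (SOME v. has_grad f v y)"

lemma has_grad_Df: "has_grad f (Df y) y"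
  unfolding Df_def using ex_has_grad by (rule someI_ex)

lemma Df_eq_grad: "y \<in> X \<Longrightarrow> Df y = grad y"
  using has_grad_Df f_diff has_grad_unique by blast

lemma borel_measurable_f[measurable]: "f \<in> borel_measurable borel"
  using has_grad_Df by (rule borel_measurable_has_grad)

lemma borel_measurable_Df[measurable]: "Df \<in> borel_measurable lebesgue"
  using borel_measurable_grad[OF has_grad_Df] by (simp add: measurable_completion)

lemma borel_measurable_N[measurable]: "N \<in> borel_measurable borel"
  using continuous_on_is_norm[OF N_norm] by (rule borel_measurable_continuous_onI)

lemma borel_measurable_dual_norm[measurable]: "dual_norm N \<in> borel_measurable borel"
  using continuous_on_is_norm[OF is_norm_dual_norm[OF N_norm]] by (rule borel_measurable_continuous_onI)

lemma borel_measurable_id_lebesgue[measurable]: "(\<lambda>x::real^'n. x) \<in> borel_measurable lebesgue"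
  by (rule measurable_completion) simp

lemma integrable_f: "integrable lborel f" and integral_f: "(\<integral>x. f x \<partial>lborel) = 1"
proof -
  have f: "(\<lambda>x. indicator X x * f x) = f"
    using f_outside by (auto simp: fun_eq_iff indicator_def)
  have "integrable lebesgue f" using f_int by (simp add: set_integrable_def f)
  then show "integrable lborel f" using integrable_completion[of f lborel] by simp
  have "(\<integral>x. f x \<partial>lebesgue) = 1" using f_int_1 by (simp add: set_lebesgue_integral_def f)
  then show "(\<integral>x. f x \<partial>lborel) = 1" using integral_completion[of f lborel] by simp
qed

text \<open>\<open>grad\<close> is only given on \<open>X\<close>; off \<open>X\<close> the extension \<open>Df\<close> is radially tangent to the zero
  set of \<open>f\<close> almost everywhere, which is what the integration by parts needs.\<close>
lemma AE_inner_grad_eq_inner_Df: "AE y in lebesgue. indicator X y * (y \<bullet> grad y) = y \<bullet> Df y"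
proof -
  have "{y. f y = 0 \<and> y \<bullet> Df y \<noteq> 0} \<in> null_sets lebesgue"
    using null_sets_zeros_nonzero_radial_grad[OF has_grad_Df] by (rule null_sets_completionI)
  from AE_not_in[OF this] show ?thesis
    by eventually_elim (use f_outside Df_eq_grad in \<open>auto simp: indicator_def\<close>)
qed

definition D :: "real^'n \<Rightarrow> real" where "D x = dual_norm N ((1 / g x) *\<^sub>R grad x)"

definition NDg :: "real^'n \<Rightarrow> real" where "NDg x = N x * D x * g x"

lemma borel_measurable_indicator_NDg[measurable]: "(\<lambda>x. indicator X x * NDg x) \<in> borel_measurable lebesgue"
proof -
  have "(\<lambda>x. indicator X x * NDg x) = (\<lambda>x. indicator X x * (N x * dual_norm N ((1 / g x) *\<^sub>R Df x) * g x))"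
    by (auto simp: fun_eq_iff indicator_def NDg_def D_def Df_eq_grad)
  also have "\<dots> \<in> borel_measurable lebesgue" by measurable
  finally show ?thesis .
qed

lemma borel_measurable_indicator_inner_grad[measurable]:
  "(\<lambda>x. indicator X x * (x \<bullet> grad x)) \<in> borel_measurable lebesgue"
proof -
  have "(\<lambda>x. indicator X x * (x \<bullet> grad x)) = (\<lambda>x. indicator X x * (x \<bullet> Df x))"
    by (auto simp: fun_eq_iff indicator_def Df_eq_grad)
  also have "\<dots> \<in> borel_measurable lebesgue" by measurable
  finally show ?thesis .
qed

lemma N_nonneg: "0 \<le> N x"
  using is_norm_nonneg[OF N_norm] .

lemma D_nonneg: "0 \<le> D x"
  unfolding D_def using is_norm_nonneg[OF is_norm_dual_norm[OF N_norm]] .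

lemma NDg_nonneg: "x \<in> X \<Longrightarrow> 0 \<le> NDg x"
  unfolding NDg_def using N_nonneg D_nonneg g_nonneg by simp

lemma NDg_le_if_D_le:
  assumes "x \<in> X" and "0 < g x \<Longrightarrow> D x \<le> c"
  shows "NDg x \<le> c * (N x * g x)"
proof (cases "g x = 0")
  case False
  then have "0 < g x" using assms(1) g_nonneg by (simp add: order_less_le)
  then show ?thesis
    using mult_left_mono[OF assms(2), of "N x * g x"] N_nonneg by (simp add: NDg_def mult_ac)
qed (simp add: NDg_def)

lemma abs_inner_grad_le_NDg:
  assumes "x \<in> X" and "0 < g x \<or> grad x = 0"
  shows "\<bar>x \<bullet> grad x\<bar> \<le> NDg x"
  using assms(2)
proof
  assume gx: "0 < g x"
  have "\<bar>x \<bullet> grad x\<bar> = g x * \<bar>x \<bullet> ((1 / g x) *\<^sub>R grad x)\<bar>" using gx by (simp add: abs_mult)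
  also have "\<dots> \<le> g x * (N x * D x)"
    unfolding D_def using gx by (intro mult_left_mono abs_inner_le_is_norm_dual_norm[OF N_norm]) simp
  finally show ?thesis by (simp add: NDg_def mult_ac)
qed (use NDg_nonneg assms(1) in simp)

lemma AE_abs_inner_grad_le_NDg: "AE x in lebesgue. x \<in> X \<longrightarrow> \<bar>x \<bullet> grad x\<bar> \<le> NDg x"
  using abs_cont by eventually_elim (use g_nonneg abs_inner_grad_le_NDg in \<open>force simp: order_less_le\<close>)


definition \<beta> :: real where "\<beta> = \<alpha> / (\<alpha> - 1)"

lemma conjugate_exponent:
  assumes "1 < \<alpha>"
  shows "1 < \<beta>" and "1 / \<alpha> + 1 / \<beta> = 1"
  using assms by (auto simp: \<beta>_def field_simps)

definition moment_N :: real where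
  "moment_N = (\<integral>x. indicator X x * (N x powr \<alpha> * g x) \<partial>lebesgue)"

definition moment_D :: real where
  "moment_D = (\<integral>x. indicator X x * (D x powr \<beta> * g x) \<partial>lebesgue)"

definition A :: real where "A = moment_N powr (1 / \<alpha>)"

definition B :: real where "B = conj_moment \<alpha> X g D"

lemma integrable_moment_N: "integrable lebesgue (\<lambda>x. indicator X x * (N x powr \<alpha> * g x))"
  using int1 by (simp add: set_integrable_def)

lemma integrable_moment_D: "1 < \<alpha> \<Longrightarrow> integrable lebesgue (\<lambda>x. indicator X x * (D x powr \<beta> * g x))"
  using int2 by (simp add: set_integrable_def D_def \<beta>_def)

lemma AE_D_le_B:
  assumes "\<alpha> = 1"
  shows "AE x in lebesgue. x \<in> X \<and> 0 < g x \<longrightarrow> D x \<le> B"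
proof -
  have "\<exists>c. AE x in lebesgue. x \<in> X \<and> 0 < g x \<longrightarrow> D x \<le> c"
    using bnd2[OF assms] by (simp add: D_def)
  from AE_le_ess_sup_wrt[OF this] show ?thesis unfolding B_def conj_moment_def using assms by simp
qed

lemma NDg_le_Young:
  assumes "1 < \<alpha>" and "x \<in> X"
  shows "NDg x \<le> (N x powr \<alpha> / \<alpha> + D x powr \<beta> / \<beta>) * g x"
  using Youngs_inequality[OF assms(1) conjugate_exponent[OF assms(1)] N_nonneg D_nonneg, of x x]
    g_nonneg assms(2) unfolding NDg_def by (intro mult_right_mono) auto

lemma AE_NDg_le_B_moment_N:
  assumes "\<alpha> = 1"
  shows "AE x in lebesgue. indicator X x * NDg x \<le> B * (indicator X x * (N x powr \<alpha> * g x))"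
  using AE_D_le_B[OF assms]
proof eventually_elim
  case (elim x)
  show ?case
  proof (cases "x \<in> X")
    case True
    then have "NDg x \<le> B * (N x * g x)" using elim by (intro NDg_le_if_D_le) auto
    then show ?thesis using True assms N_nonneg by simp
  qed simp
qed

lemma integrable_NDg: "integrable lebesgue (\<lambda>x. indicator X x * NDg x)"
proof (cases "\<alpha> = 1")
  case True
  have "integrable lebesgue (\<lambda>x. B * (indicator X x * (N x powr \<alpha> * g x)))"
    using integrable_moment_N by simp
  then show ?thesis
  proof (rule Bochner_Integration.integrable_bound)
    show "AE x in lebesgue. norm (indicator X x * NDg x) \<le> norm (B * (indicator X x * (N x powr \<alpha> * g x)))"
      using AE_NDg_le_B_moment_N[OF True]
    proof eventually_elim
      case (elim x)
      have "0 \<le> indicator X x * NDg x" using NDg_nonneg by (simp add: indicator_def)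
      then show ?case using elim by (auto simp: abs_of_nonneg intro: order_trans[OF _ abs_ge_self])
    qed
  qed simp
next
  case False
  then have "1 < \<alpha>" using alpha by simp
  have "integrable lebesgue (\<lambda>x. indicator X x * (N x powr \<alpha> * g x) / \<alpha> + indicator X x * (D x powr \<beta> * g x) / \<beta>)"
    using integrable_moment_N integrable_moment_D[OF \<open>1 < \<alpha>\<close>] by simp
  then show ?thesis
  proof (rule Bochner_Integration.integrable_bound)
    show "AE x in lebesgue. norm (indicator X x * NDg x)
        \<le> norm (indicator X x * (N x powr \<alpha> * g x) / \<alpha> + indicator X x * (D x powr \<beta> * g x) / \<beta>)"
    proof (rule AE_I2)
      fix x show "norm (indicator X x * NDg x)
        \<le> norm (indicator X x * (N x powr \<alpha> * g x) / \<alpha> + indicator X x * (D x powr \<beta> * g x) / \<beta>)"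
        using NDg_le_Young[OF \<open>1 < \<alpha>\<close>, of x] NDg_nonneg[of x]
        by (cases "x \<in> X") (simp_all add: field_simps)
    qed
  qed simp
qed

lemma integrable_inner_grad: "integrable lebesgue (\<lambda>x. indicator X x * (x \<bullet> grad x))"
  using integrable_NDg
proof (rule Bochner_Integration.integrable_bound)
  show "AE x in lebesgue. norm (indicator X x * (x \<bullet> grad x)) \<le> norm (indicator X x * NDg x)"
    using AE_abs_inner_grad_le_NDg by eventually_elim (auto simp: indicator_def)
qed simp

lemma integral_inner_grad: "(\<integral>x. indicator X x * (x \<bullet> grad x) \<partial>lebesgue) = - real CARD('n)"
proof -
  have [measurable]: "Df \<in> borel_measurable borel" using has_grad_Df by (rule borel_measurable_grad)
  have "(\<lambda>x. x \<bullet> Df x) \<in> borel_measurable borel" by measurable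
  then have m: "(\<lambda>x. x \<bullet> Df x) \<in> borel_measurable lborel" by simp
  have "integrable lebesgue (\<lambda>x. x \<bullet> Df x)"
    using integrable_cong_AE[OF _ _ AE_inner_grad_eq_inner_Df] integrable_inner_grad by simp
  then have "integrable lborel (\<lambda>x. x \<bullet> Df x)"
    using integrable_completion[OF m] by simp
  moreover have "(\<integral>x. indicator X x * (x \<bullet> grad x) \<partial>lebesgue) = (\<integral>x. x \<bullet> Df x \<partial>lborel)"
  proof -
    have "(\<integral>x. indicator X x * (x \<bullet> grad x) \<partial>lebesgue) = (\<integral>x. x \<bullet> Df x \<partial>lebesgue)"
      by (rule integral_cong_AE[OF _ _ AE_inner_grad_eq_inner_Df]) measurable
    also have "\<dots> = (\<integral>x. x \<bullet> Df x \<partial>lborel)"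
      using integral_completion[OF m] by simp
    finally show ?thesis .
  qed
  ultimately show ?thesis
    using integral_inner_grad_lborel[OF has_grad_Df integrable_f] integral_f by simp
qed

lemma card_le_integral_NDg: "real CARD('n) \<le> (\<integral>x. indicator X x * NDg x \<partial>lebesgue)"
proof -
  have "real CARD('n) = (\<integral>x. - (indicator X x * (x \<bullet> grad x)) \<partial>lebesgue)"
    using integral_inner_grad by simp
  also have "\<dots> \<le> (\<integral>x. indicator X x * NDg x \<partial>lebesgue)"
    using integrable_inner_grad integrable_NDg AE_abs_inner_grad_le_NDg
    by (intro integral_mono_AE) (auto elim!: eventually_mono simp: indicator_def)
  finally show ?thesis .
qed

lemma not_AE_NDg_eq_0: "\<not> (AE x in lebesgue. x \<in> X \<longrightarrow> N x = 0 \<or> D x = 0 \<or> g x = 0)"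
proof
  assume "AE x in lebesgue. x \<in> X \<longrightarrow> N x = 0 \<or> D x = 0 \<or> g x = 0"
  then have "AE x in lebesgue. indicator X x * NDg x = 0"
    by eventually_elim (auto simp: NDg_def indicator_def)
  then have "(\<integral>x. indicator X x * NDg x \<partial>lebesgue) = 0" by (simp add: integral_eq_zero_AE)
  then show False using card_le_integral_NDg by simp
qed

lemma moment_N_pos: "0 < moment_N"
proof -
  have nonneg: "AE x in lebesgue. 0 \<le> indicator X x * (N x powr \<alpha> * g x)"
    using g_nonneg by (auto simp: indicator_def)
  then have "0 \<le> moment_N" unfolding moment_N_def by (rule integral_nonneg_AE)
  moreover have "moment_N \<noteq> 0"
  proof
    assume "moment_N = 0"
    then have "AE x in lebesgue. indicator X x * (N x powr \<alpha> * g x) = 0"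
      using integral_nonneg_eq_0_iff_AE[OF integrable_moment_N nonneg] by (simp add: moment_N_def)
    then have "AE x in lebesgue. x \<in> X \<longrightarrow> N x = 0 \<or> D x = 0 \<or> g x = 0"
      by eventually_elim (auto simp: indicator_def)
    then show False using not_AE_NDg_eq_0 by blast
  qed
  ultimately show ?thesis by simp
qed

lemma moment_D_pos:
  assumes "1 < \<alpha>"
  shows "0 < moment_D"
proof -
  have nonneg: "AE x in lebesgue. 0 \<le> indicator X x * (D x powr \<beta> * g x)"
    using g_nonneg by (auto simp: indicator_def)
  then have "0 \<le> moment_D" unfolding moment_D_def by (rule integral_nonneg_AE)
  moreover have "moment_D \<noteq> 0"
  proof
    assume "moment_D = 0"
    then have "AE x in lebesgue. indicator X x * (D x powr \<beta> * g x) = 0"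
      using integral_nonneg_eq_0_iff_AE[OF integrable_moment_D[OF assms] nonneg]
      by (simp add: moment_D_def)
    then have "AE x in lebesgue. x \<in> X \<longrightarrow> N x = 0 \<or> D x = 0 \<or> g x = 0"
      by eventually_elim (auto simp: indicator_def)
    then show False using not_AE_NDg_eq_0 by blast
  qed
  ultimately show ?thesis by simp
qed

lemma A_pos: "0 < A"
  using moment_N_pos by (simp add: A_def)

lemma A_powr: "A powr \<alpha> = moment_N"
  using moment_N_pos alpha by (simp add: A_def powr_powr)

lemma B_eq_moment_D: "1 < \<alpha> \<Longrightarrow> B = moment_D powr (1 / \<beta>)"
  by (simp add: B_def conj_moment_def moment_D_def \<beta>_def set_lebesgue_integral_def)

lemma B_pos: "1 < \<alpha> \<Longrightarrow> 0 < B"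
  using moment_D_pos by (simp add: B_eq_moment_D)

lemma B_powr: "1 < \<alpha> \<Longrightarrow> B powr \<beta> = moment_D"
  using moment_D_pos conjugate_exponent by (simp add: B_eq_moment_D powr_powr)

definition young_bound :: "real^'n \<Rightarrow> real" where
  "young_bound x = A * B * (N x powr \<alpha> * g x / (\<alpha> * moment_N) + D x powr \<beta> * g x / (\<beta> * moment_D))"

text \<open>Young's inequality applied to \<open>N x / A\<close> and \<open>D x / B\<close>: the pointwise form of Hoelder's inequality.\<close>
lemma NDg_le_young_bound:
  assumes "1 < \<alpha>" and "x \<in> X"
  shows "NDg x \<le> young_bound x"
proof -
  have "(N x / A) * (D x / B) \<le> (N x / A) powr \<alpha> / \<alpha> + (D x / B) powr \<beta> / \<beta>"
    using A_pos B_pos[OF assms(1)] N_nonneg D_nonneg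
    by (intro Youngs_inequality assms(1) conjugate_exponent[OF assms(1)]) auto
  also have "\<dots> = N x powr \<alpha> / (\<alpha> * moment_N) + D x powr \<beta> / (\<beta> * moment_D)"
    using A_pos B_pos[OF assms(1)] N_nonneg D_nonneg
    by (simp add: powr_divide A_powr B_powr[OF assms(1)] mult.commute)
  finally have "A * B * g x * ((N x / A) * (D x / B))
      \<le> A * B * g x * (N x powr \<alpha> / (\<alpha> * moment_N) + D x powr \<beta> / (\<beta> * moment_D))"
    using A_pos B_pos[OF assms(1)] g_nonneg assms(2) by (intro mult_left_mono) auto
  then show ?thesis
    using A_pos B_pos[OF assms(1)] by (simp add: NDg_def young_bound_def field_simps)
qed

lemma integrable_young_bound:
  assumes "1 < \<alpha>"
  shows "integrable lebesgue (\<lambda>x. indicator X x * young_bound x)"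
    and "(\<integral>x. indicator X x * young_bound x \<partial>lebesgue) = A * B"
proof -
  have eq: "(\<lambda>x. indicator X x * young_bound x)
      = (\<lambda>x. A * B / (\<alpha> * moment_N) * (indicator X x * (N x powr \<alpha> * g x))
           + A * B / (\<beta> * moment_D) * (indicator X x * (D x powr \<beta> * g x)))"
    by (auto simp: fun_eq_iff young_bound_def field_simps)
  show "integrable lebesgue (\<lambda>x. indicator X x * young_bound x)"
    unfolding eq using integrable_moment_N integrable_moment_D[OF assms] by simp
  have "(\<integral>x. indicator X x * young_bound x \<partial>lebesgue)
      = A * B / (\<alpha> * moment_N) * moment_N + A * B / (\<beta> * moment_D) * moment_D"
    unfolding eq using integrable_moment_N integrable_moment_D[OF assms]
    by (simp add: moment_N_def moment_D_def)
  also have "\<dots> = A * B * (1 / \<alpha> + 1 / \<beta>)"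
    using moment_N_pos moment_D_pos[OF assms] by (simp add: field_simps)
  finally show "(\<integral>x. indicator X x * young_bound x \<partial>lebesgue) = A * B"
    using conjugate_exponent[OF assms] by simp
qed

lemma A_eq_moment_N: "\<alpha> = 1 \<Longrightarrow> A = moment_N"
  unfolding A_def using moment_N_pos by simp

lemma integral_B_moment_N: "(\<integral>x. B * (indicator X x * (N x powr \<alpha> * g x)) \<partial>lebesgue) = moment_N * B"
  by (simp add: moment_N_def mult.commute)

lemma integral_NDg_le_AB: "(\<integral>x. indicator X x * NDg x \<partial>lebesgue) \<le> A * B"
proof (cases "\<alpha> = 1")
  case True
  have "(\<integral>x. indicator X x * NDg x \<partial>lebesgue) \<le> (\<integral>x. B * (indicator X x * (N x powr \<alpha> * g x)) \<partial>lebesgue)"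
    using integrable_NDg integrable_moment_N AE_NDg_le_B_moment_N[OF True] by (intro integral_mono_AE) auto
  also have "\<dots> = A * B"
    by (simp only: integral_B_moment_N A_eq_moment_N[OF True])
  finally show ?thesis .
next
  case False
  then have "1 < \<alpha>" using alpha by simp
  have "AE x in lebesgue. indicator X x * NDg x \<le> indicator X x * young_bound x"
    using NDg_le_young_bound[OF \<open>1 < \<alpha>\<close>] by (auto simp: indicator_def)
  with integral_mono_AE[OF integrable_NDg integrable_young_bound(1)[OF \<open>1 < \<alpha>\<close>]]
  show ?thesis using integrable_young_bound(2)[OF \<open>1 < \<alpha>\<close>] by simp
qed

lemma card_le_AB: "real CARD('n) \<le> A * B"
  using card_le_integral_NDg integral_NDg_le_AB by linarith

lemma not_AE_not_positive_density: "\<not> (AE x in lebesgue. \<not> (x \<in> X \<and> 0 < g x))"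
proof
  assume "AE x in lebesgue. \<not> (x \<in> X \<and> 0 < g x)"
  then have "AE x in lebesgue. indicator X x * g x = 0"
    by eventually_elim (use g_nonneg in \<open>force simp: indicator_def\<close>)
  then have "(\<integral>x. indicator X x * g x \<partial>lebesgue) = 0" by (simp add: integral_eq_zero_AE)
  then show False using g_int_1 by (simp add: set_lebesgue_integral_def)
qed

lemma grad_form_inner_and_D:
  assumes "x \<noteq> 0" and "has_grad N v x" and grad: "grad x = (- K * g x * N x powr (\<alpha> - 1)) *\<^sub>R v"
    and "0 \<le> K"
  shows "- (x \<bullet> grad x) = K * (N x powr \<alpha> * g x)"
    and "0 < g x \<Longrightarrow> D x = K * N x powr (\<alpha> - 1)"
proof -
  have v: "norming_functional N x v" using norming_functional_has_grad[OF N_norm assms(2)] .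
  have "0 < N x" using is_norm_pos[OF N_norm assms(1)] .
  then have "N x powr (\<alpha> - 1) * N x = N x powr \<alpha>" by (simp add: powr_diff)
  then show "- (x \<bullet> grad x) = K * (N x powr \<alpha> * g x)"
    using v grad by (simp add: norming_functional_def inner_commute mult_ac)
  assume "0 < g x"
  then have "(1 / g x) *\<^sub>R grad x = (- (K * N x powr (\<alpha> - 1))) *\<^sub>R v" using grad by simp
  then show "D x = K * N x powr (\<alpha> - 1)"
    using dual_norm_norming_functional[OF N_norm v assms(1)] \<open>0 \<le> K\<close>
      is_norm_scaleR[OF is_norm_dual_norm[OF N_norm]] is_norm_minus[OF is_norm_dual_norm[OF N_norm]]
    by (simp add: D_def)
qed

lemma AB_eq_card_if_grad_form:
  assumes K: "0 < K"
    and form: "AE x in lebesgue. x \<in> X \<longrightarrow>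
      (\<exists>v. has_grad N v x \<and> grad x = (- K * g x * N x powr (\<alpha> - 1)) *\<^sub>R v)"
  shows "A * B = real CARD('n)"
proof -
  have P: "AE x in lebesgue. x \<in> X \<longrightarrow> - (x \<bullet> grad x) = K * (N x powr \<alpha> * g x)
      \<and> (0 < g x \<longrightarrow> D x = K * N x powr (\<alpha> - 1)) \<and> 0 < N x"
    using form AE_neq_lebesgue[of 0]
    by eventually_elim (use K grad_form_inner_and_D is_norm_pos[OF N_norm] in \<open>meson less_imp_le\<close>)
  have card: "real CARD('n) = K * moment_N"
  proof -
    have "real CARD('n) = (\<integral>x. - (indicator X x * (x \<bullet> grad x)) \<partial>lebesgue)"
      using integral_inner_grad by simp
    also have "\<dots> = (\<integral>x. K * (indicator X x * (N x powr \<alpha> * g x)) \<partial>lebesgue)"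
    proof (rule integral_cong_AE)
      show "AE x in lebesgue. - (indicator X x * (x \<bullet> grad x)) = K * (indicator X x * (N x powr \<alpha> * g x))"
        using P by eventually_elim (auto simp: indicator_def)
    qed (use borel_measurable_integrable[OF integrable_moment_N] in simp_all)
    finally show ?thesis by (simp add: moment_N_def)
  qed
  show ?thesis
  proof (cases "\<alpha> = 1")
    case False
    then have "1 < \<alpha>" using alpha by simp
    have "moment_D = (\<integral>x. K powr \<beta> * (indicator X x * (N x powr \<alpha> * g x)) \<partial>lebesgue)"
      unfolding moment_D_def
    proof (rule integral_cong_AE)
      show "AE x in lebesgue. indicator X x * (D x powr \<beta> * g x) = K powr \<beta> * (indicator X x * (N x powr \<alpha> * g x))"
        using P
      proof eventually_elim
        case (elim x)
        have "(\<alpha> - 1) * \<beta> = \<alpha>" using \<open>1 < \<alpha>\<close> by (simp add: \<beta>_def)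
        then show ?case
          using elim K g_nonneg by (cases "x \<in> X \<and> 0 < g x") (auto simp: indicator_def powr_mult powr_powr)
      qed
    qed (use borel_measurable_integrable[OF integrable_moment_D[OF \<open>1 < \<alpha>\<close>]]
             borel_measurable_integrable[OF integrable_moment_N] in simp_all)
    then have "B = K * moment_N powr (1 / \<beta>)"
      using K moment_N_pos conjugate_exponent[OF \<open>1 < \<alpha>\<close>]
      by (simp add: B_eq_moment_D[OF \<open>1 < \<alpha>\<close>] moment_N_def[symmetric] powr_mult powr_powr)
    then have "A * B = K * moment_N powr (1 / \<alpha> + 1 / \<beta>)"
      by (simp add: A_def powr_add)
    then show ?thesis using conjugate_exponent[OF \<open>1 < \<alpha>\<close>] card moment_N_pos by simp
  next
    case True
    have "ess_sup_wrt X g D = K"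
    proof (rule ess_sup_wrt_eqI)
      show "AE x in lebesgue. x \<in> X \<and> 0 < g x \<longrightarrow> D x \<le> K"
        using P by eventually_elim (use True in auto)
      fix c assume "AE x in lebesgue. x \<in> X \<and> 0 < g x \<longrightarrow> D x \<le> c"
      with P have Kc: "AE x in lebesgue. x \<in> X \<and> 0 < g x \<longrightarrow> K \<le> c"
        by eventually_elim (use True in auto)
      show "K \<le> c"
      proof (rule ccontr)
        assume "\<not> K \<le> c"
        with Kc have "AE x in lebesgue. \<not> (x \<in> X \<and> 0 < g x)" by (auto elim: eventually_mono)
        with not_AE_not_positive_density show False by blast
      qed
    qed
    then show ?thesis
      using card A_eq_moment_N[OF True] unfolding B_def conj_moment_def using True by simp
  qed
qed


lemma AE_NDg_eq_neg_inner_grad: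
  assumes "A * B = real CARD('n)"
  shows "AE x in lebesgue. x \<in> X \<longrightarrow> NDg x = - (x \<bullet> grad x)"
proof -
  have "AE x in lebesgue. - (indicator X x * (x \<bullet> grad x)) = indicator X x * NDg x"
  proof (rule AE_eq_if_integral_le_mono[OF _ integrable_NDg])
    show "integrable lebesgue (\<lambda>x. - (indicator X x * (x \<bullet> grad x)))"
      using integrable_inner_grad by simp
    show "AE x in lebesgue. - (indicator X x * (x \<bullet> grad x)) \<le> indicator X x * NDg x"
      using AE_abs_inner_grad_le_NDg by eventually_elim (auto simp: indicator_def)
    show "(\<integral>x. indicator X x * NDg x \<partial>lebesgue) \<le> (\<integral>x. - (indicator X x * (x \<bullet> grad x)) \<partial>lebesgue)"
      using integral_NDg_le_AB assms integral_inner_grad by simp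
  qed
  then show ?thesis by eventually_elim (auto simp: indicator_def)
qed

text \<open>Equality in Young's inequality forces \<open>(N x / A) powr \<alpha> = (D x / B) powr \<beta>\<close>.\<close>
lemma D_eq_if_NDg_eq_young_bound:
  assumes "1 < \<alpha>" and "x \<in> X" and "0 < g x" and "NDg x = young_bound x"
  shows "D x = B / A powr (\<alpha> - 1) * N x powr (\<alpha> - 1)"
proof -
  note AB = A_pos B_pos[OF assms(1)]
  have "(A * B * g x) * ((N x / A) * (D x / B))
      = (A * B * g x) * ((N x / A) powr \<alpha> / \<alpha> + (D x / B) powr \<beta> / \<beta>)"
    using assms(4) AB N_nonneg D_nonneg
    by (simp add: NDg_def young_bound_def powr_divide A_powr B_powr[OF assms(1)] field_simps)
  then have "(N x / A) * (D x / B) = (N x / A) powr \<alpha> / \<alpha> + (D x / B) powr \<beta> / \<beta>"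
    using AB assms(3) by simp
  then have eq: "(N x / A) powr \<alpha> = (D x / B) powr \<beta>"
    using AB N_nonneg D_nonneg
    by (intro Youngs_inequality_eq_imp assms(1) conjugate_exponent[OF assms(1)]) auto
  have "\<alpha> / \<beta> = \<alpha> - 1" using assms(1) by (simp add: \<beta>_def)
  have "D x / B = ((D x / B) powr \<beta>) powr (1 / \<beta>)"
    using AB D_nonneg conjugate_exponent(1)[OF assms(1)] by (simp add: powr_powr)
  also have "\<dots> = (N x / A) powr (\<alpha> - 1)"
    unfolding eq[symmetric] using \<open>\<alpha> / \<beta> = \<alpha> - 1\<close> by (simp add: powr_powr)
  also have "\<dots> = N x powr (\<alpha> - 1) / A powr (\<alpha> - 1)"
    using AB N_nonneg by (simp add: powr_divide)
  finally show ?thesis using AB by (simp add: field_simps)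
qed

lemma ex_D_eq_if_AB_eq_card:
  assumes eq: "A * B = real CARD('n)"
  shows "\<exists>K>0. AE x in lebesgue. x \<in> X \<and> 0 < g x \<and> x \<noteq> 0 \<longrightarrow> D x = K * N x powr (\<alpha> - 1)"
proof (cases "\<alpha> = 1")
  case True
  have "AE x in lebesgue. indicator X x * NDg x = B * (indicator X x * (N x powr \<alpha> * g x))"
  proof (rule AE_eq_if_integral_le_mono[OF integrable_NDg _ AE_NDg_le_B_moment_N[OF True]])
    show "integrable lebesgue (\<lambda>x. B * (indicator X x * (N x powr \<alpha> * g x)))"
      using integrable_moment_N by simp
    have "(\<integral>x. B * (indicator X x * (N x powr \<alpha> * g x)) \<partial>lebesgue) = A * B"
      by (simp only: integral_B_moment_N A_eq_moment_N[OF True])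
    then show "(\<integral>x. B * (indicator X x * (N x powr \<alpha> * g x)) \<partial>lebesgue) \<le> (\<integral>x. indicator X x * NDg x \<partial>lebesgue)"
      using card_le_integral_NDg eq by simp
  qed
  then have "AE x in lebesgue. x \<in> X \<and> 0 < g x \<and> x \<noteq> 0 \<longrightarrow> D x = B * N x powr (\<alpha> - 1)"
  proof eventually_elim
    case (elim x)
    show ?case
    proof
      assume x: "x \<in> X \<and> 0 < g x \<and> x \<noteq> 0"
      then have "0 < N x" using is_norm_pos[OF N_norm] by blast
      then show "D x = B * N x powr (\<alpha> - 1)" using elim x True by (simp add: NDg_def)
    qed
  qed
  moreover have "0 < B" using eq A_pos zero_less_mult_pos[of A B] by simp
  ultimately show ?thesis by blast
next
  case False
  then have "1 < \<alpha>" using alpha by simp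
  have "AE x in lebesgue. indicator X x * NDg x = indicator X x * young_bound x"
  proof (rule AE_eq_if_integral_le_mono[OF integrable_NDg integrable_young_bound(1)[OF \<open>1 < \<alpha>\<close>]])
    show "AE x in lebesgue. indicator X x * NDg x \<le> indicator X x * young_bound x"
      using NDg_le_young_bound[OF \<open>1 < \<alpha>\<close>] by (auto simp: indicator_def)
    show "(\<integral>x. indicator X x * young_bound x \<partial>lebesgue) \<le> (\<integral>x. indicator X x * NDg x \<partial>lebesgue)"
      using integrable_young_bound(2)[OF \<open>1 < \<alpha>\<close>] card_le_integral_NDg eq by simp
  qed
  then have "AE x in lebesgue. x \<in> X \<and> 0 < g x \<and> x \<noteq> 0 \<longrightarrow> D x = B / A powr (\<alpha> - 1) * N x powr (\<alpha> - 1)"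
    by eventually_elim (use D_eq_if_NDg_eq_young_bound[OF \<open>1 < \<alpha>\<close>] in \<open>auto simp: indicator_def\<close>)
  moreover have "0 < B / A powr (\<alpha> - 1)" using A_pos B_pos[OF \<open>1 < \<alpha>\<close>] by simp
  ultimately show ?thesis by blast
qed

text \<open>Where \<open>g x > 0\<close>, the vector \<open>- grad x / (g x * D x)\<close> norms \<open>x\<close>; by strict convexity of the dual
  norm it is the gradient of \<open>N\<close> at \<open>x\<close>.\<close>
lemma grad_form_if_strictly_convex_dual:
  assumes sc: "strictly_convex_norm (dual_norm N)" and "0 < K"
    and x: "x \<in> X" "x \<noteq> 0"
    and g0: "g x = 0 \<Longrightarrow> grad x = 0"
    and NDg: "NDg x = - (x \<bullet> grad x)"
    and D: "0 < g x \<Longrightarrow> D x = K * N x powr (\<alpha> - 1)"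
  shows "\<exists>v. has_grad N v x \<and> grad x = (- K * g x * N x powr (\<alpha> - 1)) *\<^sub>R v"
proof (cases "g x = 0")
  case True
  obtain z where "norming_functional N x z" using ex_norming_functional[OF N_norm] by blast
  then have "has_grad N z x" using has_grad_is_norm_if_strictly_convex_dual[OF N_norm sc x(2)] by blast
  then show ?thesis using True g0 by auto
next
  case False
  then have "0 < g x" using g_nonneg x(1) by (simp add: order_less_le)
  define u where "u = (1 / g x) *\<^sub>R grad x"
  have grad: "grad x = g x *\<^sub>R u" using \<open>0 < g x\<close> by (simp add: u_def)
  have "0 < D x" using D[OF \<open>0 < g x\<close>] \<open>0 < K\<close> is_norm_pos[OF N_norm x(2)] by simp
  define w where "w = (- 1 / D x) *\<^sub>R u"
  have "g x * (x \<bullet> u) = g x * - (N x * D x)"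
    using NDg by (simp add: grad NDg_def algebra_simps)
  then have "x \<bullet> u = - (N x * D x)" using \<open>0 < g x\<close> by (metis mult_cancel_left order_less_irrefl)
  then have "w \<bullet> x = N x" using \<open>0 < D x\<close> by (simp add: w_def inner_commute)
  moreover have "dual_norm N w = \<bar>- 1 / D x\<bar> * dual_norm N u"
    unfolding w_def by (rule is_norm_scaleR[OF is_norm_dual_norm[OF N_norm]])
  then have "dual_norm N w = 1" using \<open>0 < D x\<close> by (simp add: D_def u_def)
  ultimately have "norming_functional N x w"
    using dual_norm_le_1_iff[OF N_norm, of w] by (simp add: norming_functional_def)
  then have "has_grad N w x" by (rule has_grad_is_norm_if_strictly_convex_dual[OF N_norm sc x(2)])
  moreover have "grad x = (- K * g x * N x powr (\<alpha> - 1)) *\<^sub>R w"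
    using \<open>0 < D x\<close> D[OF \<open>0 < g x\<close>] \<open>0 < K\<close> is_norm_pos[OF N_norm x(2)] by (simp add: grad w_def)
  ultimately show ?thesis by blast
qed

lemma grad_form_if_AB_eq_card:
  assumes sc: "strictly_convex_norm (dual_norm N)" and eq: "A * B = real CARD('n)"
  shows "\<exists>K>0. AE x in lebesgue. x \<in> X \<longrightarrow>
      (\<exists>v. has_grad N v x \<and> grad x = (- K * g x * N x powr (\<alpha> - 1)) *\<^sub>R v)"
proof -
  obtain K where "0 < K"
    and D: "AE x in lebesgue. x \<in> X \<and> 0 < g x \<and> x \<noteq> 0 \<longrightarrow> D x = K * N x powr (\<alpha> - 1)"
    using ex_D_eq_if_AB_eq_card[OF eq] by blast
  have "AE x in lebesgue. x \<in> X \<longrightarrow>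
      (\<exists>v. has_grad N v x \<and> grad x = (- K * g x * N x powr (\<alpha> - 1)) *\<^sub>R v)"
    using D AE_NDg_eq_neg_inner_grad[OF eq] abs_cont AE_neq_lebesgue[of 0]
    by eventually_elim (use grad_form_if_strictly_convex_dual[OF sc \<open>0 < K\<close>] in blast)
  with \<open>0 < K\<close> show ?thesis by blast
qed

end

theorem corollary2:
  fixes X :: "(real^'n) set"
    and f g :: "real^'n \<Rightarrow> real"
    and grad :: "real^'n \<Rightarrow> real^'n"
    and N :: "real^'n \<Rightarrow> real"
    and \<alpha> :: real
  defines "D \<equiv> (\<lambda>x. dual_norm N ((1 / g x) *\<^sub>R grad x))"
  defines "A \<equiv> (\<integral>x\<in>X. N x powr \<alpha> * g x \<partial>lebesgue) powr (1 / \<alpha>)"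
  defines "B \<equiv> conj_moment \<alpha> X g D"
  assumes X_meas: "X \<in> sets lebesgue"
    and f_dens: "\<forall>x\<in>X. 0 \<le> f x" "set_integrable lebesgue X f" "(\<integral>x\<in>X. f x \<partial>lebesgue) = 1"
    and g_dens: "\<forall>x\<in>X. 0 \<le> g x" "set_integrable lebesgue X g" "(\<integral>x\<in>X. g x \<partial>lebesgue) = 1"
    and f_meas: "f \<in> borel_measurable lebesgue"
    and g_meas: "g \<in> borel_measurable lebesgue"
    and f_outside: "\<forall>x. x \<notin> X \<longrightarrow> f x = 0"
    and f_diff: "\<forall>x\<in>X. has_grad f (grad x) x"
    and f_bdry: "\<forall>x\<in>frontier X. f x = 0 \<and> f differentiable (at x)"
    and abs_cont: "AE x in lebesgue. x \<in> X \<and> g x = 0 \<longrightarrow> grad x = 0"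
    and norm: "is_norm N"
    and alpha: "1 \<le> \<alpha>"
    and int1: "set_integrable lebesgue X (\<lambda>x. N x powr \<alpha> * g x)"
    and int2: "\<alpha> \<noteq> 1 \<Longrightarrow> set_integrable lebesgue X (\<lambda>x. D x powr (\<alpha> / (\<alpha> - 1)) * g x)"
    and bnd2: "\<alpha> = 1 \<Longrightarrow> \<exists>c. AE x in lebesgue. x \<in> X \<and> 0 < g x \<longrightarrow> D x \<le> c"
  shows "A * B \<ge> real CARD('n)
     \<and> ((\<exists>K>0. AE x in lebesgue. x \<in> X \<longrightarrow>
            (\<exists>v. has_grad N v x \<and> grad x = (- K * g x * N x powr (\<alpha> - 1)) *\<^sub>R v))
         \<longrightarrow> A * B = real CARD('n))
     \<and> (strictly_convex_norm (dual_norm N) \<and> A * B = real CARD('n) \<longrightarrow>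
         (\<exists>K>0. AE x in lebesgue. x \<in> X \<longrightarrow>
            (\<exists>v. has_grad N v x \<and> grad x = (- K * g x * N x powr (\<alpha> - 1)) *\<^sub>R v)))"
proof -
  interpret S: uncertainty_setting X f g grad N \<alpha>
    using X_meas f_dens(2,3) g_dens(1,3) g_meas f_outside f_diff f_bdry abs_cont norm alpha int1 int2 bnd2
    by unfold_locales (simp_all add: D_def)
  have "A = S.A"
    by (simp add: A_def S.A_def S.moment_N_def set_lebesgue_integral_def)
  moreover have "B = S.B"
    by (simp add: B_def S.B_def D_def S.D_def[abs_def])
  ultimately show ?thesis
    using S.card_le_AB S.AB_eq_card_if_grad_form S.grad_form_if_AB_eq_card by blast
qed

end
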